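(* Let $|V(x)|\lesssim(1+|x|)^{-19-\epsilon}$ for some $\epsilon>0$ and suppose zero is the second kind resonance of $H=\Delta^2+V$, with $S_2A^2_{-3,1}S_2$ the leading coefficient in the expansion $(M^\pm(\lambda))^{-1}=\lambda^{-3}S_2A^2_{-3,1}S_2+\dots$. Let $$K_{t,4}(x,y)=\int_0^\infty\chi(\lambda)\sin(t\lambda^2)\lambda^{-2}[G_0vS_2A^2_{-3,1}S_2vG_0](x,y)\,d\lambda.$$ Then $\sup_{x,y\in\mathbb{R}^3}|K_{t,4}(x,y)|\lesssim|t|^{1/2}$.
   Context: $U=\operatorname{sign}V$ ($U=1$ where $V=0$), $v=|V|^{1/2}$; $G_0$ is the integral operator with kernel $-\frac{|x-y|}{8\pi}$; $P=\|V\|_{L^1}^{-1}v\langle v,\cdot\rangle$; $S_2$ is the zero-energy projection defined by: $T=U+vG_0v$, $Q=I-P$, $S_1$ the Riesz projection onto $\ker(QTQ)$ in $QL^2$, $T_1=S_1TPTS_1-\frac{\|V\|_{L^1}}{3(8\pi)^2}S_1vG_1vS_1$ ($G_1$ has kernel $|x-y|^2$), and $S_2$ the Riesz projection onto $\ker T_1$; in particular $S_2v=0$. $A^2_{-3,1}$ is a $\lambda$-independent absolutely bounded operator on $L^2$. $\chi$ is a smooth even cutoff equal to $1$ near $0$ and supported in $|\lambda|\le2\lambda_0$. *)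

theory Defs
  imports "HOL-Analysis.Analysis"
begin

type_synonym pt = "real^3"

text \<open>Real square-integrable functions on R^3 (representatives, not classes).\<close>
definition L2 :: "(pt \<Rightarrow> real) set" where
  "L2 = {f. f \<in> borel_measurable lborel \<and> integrable lborel (\<lambda>x. (f x)^2)}"

definition ip :: "(pt \<Rightarrow> real) \<Rightarrow> (pt \<Rightarrow> real) \<Rightarrow> real" where
  "ip f g = (\<integral>x. f x * g x \<partial>lborel)"

definition L2norm :: "(pt \<Rightarrow> real) \<Rightarrow> real" where
  "L2norm f = sqrt (\<integral>x. (f x)^2 \<partial>lborel)"

definition vfun :: "(pt \<Rightarrow> real) \<Rightarrow> pt \<Rightarrow> real" where
  "vfun V x = sqrt \<bar>V x\<bar>"

definition Ufun :: "(pt \<Rightarrow> real) \<Rightarrow> pt \<Rightarrow> real" where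
  "Ufun V x = (if V x < 0 then -1 else 1)"

definition G0 :: "pt \<Rightarrow> pt \<Rightarrow> real" where
  "G0 x y = - norm (x - y) / (8 * pi)"

definition G1 :: "pt \<Rightarrow> pt \<Rightarrow> real" where
  "G1 x y = (norm (x - y))^2"

definition L1norm :: "(pt \<Rightarrow> real) \<Rightarrow> real" where
  "L1norm V = (\<integral>x. \<bar>V x\<bar> \<partial>lborel)"

definition Pop :: "(pt \<Rightarrow> real) \<Rightarrow> (pt \<Rightarrow> real) \<Rightarrow> pt \<Rightarrow> real" where
  "Pop V f = (\<lambda>x. vfun V x * ip (vfun V) f / L1norm V)"

definition Qop :: "(pt \<Rightarrow> real) \<Rightarrow> (pt \<Rightarrow> real) \<Rightarrow> pt \<Rightarrow> real" where
  "Qop V f = (\<lambda>x. f x - Pop V f x)"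

definition Top :: "(pt \<Rightarrow> real) \<Rightarrow> (pt \<Rightarrow> real) \<Rightarrow> pt \<Rightarrow> real" where
  "Top V f = (\<lambda>x. Ufun V x * f x + vfun V x * (\<integral>y. G0 x y * vfun V y * f y \<partial>lborel))"

definition vG1v :: "(pt \<Rightarrow> real) \<Rightarrow> (pt \<Rightarrow> real) \<Rightarrow> pt \<Rightarrow> real" where
  "vG1v V f = (\<lambda>x. vfun V x * (\<integral>y. G1 x y * vfun V y * f y \<partial>lborel))"

text \<open>Range of S_1: ker(QTQ) inside QL^2.\<close>
definition kerQTQ :: "(pt \<Rightarrow> real) \<Rightarrow> (pt \<Rightarrow> real) set" where
  "kerQTQ V = {f \<in> L2. (AE x in lborel. Qop V f x = f x) \<and>
                  (AE x in lborel. Qop V (Top V (Qop V f)) x = 0)}"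

text \<open>Range of S_2: ker T_1 inside S_1 L^2, where
  T_1 = S_1 T P T S_1 - ||V||_1/(3(8 pi)^2) S_1 v G_1 v S_1.
  For f in S_1 L^2 (so S_1 f = f) and S_1 the orthogonal projection onto kerQTQ,
  T_1 f = 0 iff T P T f - c vG_1v f is orthogonal to kerQTQ.\<close>
definition kerT1 :: "(pt \<Rightarrow> real) \<Rightarrow> (pt \<Rightarrow> real) set" where
  "kerT1 V = {f \<in> kerQTQ V. \<forall>g \<in> kerQTQ V.
      ip g (Top V (Pop V (Top V f)))
      - L1norm V / (3 * (8 * pi)^2) * ip g (vG1v V f) = 0}"

definition orthproj :: "(pt \<Rightarrow> real) set \<Rightarrow> (pt \<Rightarrow> real) \<Rightarrow> pt \<Rightarrow> real" where
  "orthproj X h = (SOME g. g \<in> X \<and> (\<forall>k \<in> X. ip (\<lambda>x. h x - g x) k = 0))"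

definition S2 :: "(pt \<Rightarrow> real) \<Rightarrow> (pt \<Rightarrow> real) \<Rightarrow> pt \<Rightarrow> real" where
  "S2 V = orthproj (kerT1 V)"

definition abs_bounded :: "(pt \<Rightarrow> pt \<Rightarrow> complex) \<Rightarrow> bool" where
  "abs_bounded a \<longleftrightarrow> (\<lambda>(x, y). a x y) \<in> borel_measurable (lborel \<Otimes>\<^sub>M lborel) \<and>
     (\<exists>C. \<forall>f \<in> L2. \<forall>g \<in> L2.
        (\<integral>\<^sup>+ x. (\<integral>\<^sup>+ y. ennreal (norm (a x y) * \<bar>f y\<bar> * \<bar>g x\<bar>) \<partial>lborel) \<partial>lborel)
          \<le> ennreal (C * L2norm f * L2norm g))"

definition Aop :: "(pt \<Rightarrow> pt \<Rightarrow> complex) \<Rightarrow> (pt \<Rightarrow> real) \<Rightarrow> pt \<Rightarrow> complex" where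
  "Aop a f = (\<lambda>x. \<integral>y. a x y * complex_of_real (f y) \<partial>lborel)"

text \<open>Kernel of G_0 v S_2 A S_2 v G_0 at (x,y).\<close>
definition leadKer :: "(pt \<Rightarrow> real) \<Rightarrow> (pt \<Rightarrow> pt \<Rightarrow> complex) \<Rightarrow> pt \<Rightarrow> pt \<Rightarrow> complex" where
  "leadKer V a x y = (\<integral>z. complex_of_real (S2 V (\<lambda>w. G0 x w * vfun V w) z)
                         * Aop a (S2 V (\<lambda>w. vfun V w * G0 w y)) z \<partial>lborel)"

definition Kt4 :: "(pt \<Rightarrow> real) \<Rightarrow> (pt \<Rightarrow> pt \<Rightarrow> complex) \<Rightarrow> (real \<Rightarrow> real)
                   \<Rightarrow> real \<Rightarrow> pt \<Rightarrow> pt \<Rightarrow> complex" where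
  "Kt4 V a chi t x y = set_lebesgue_integral lborel {0<..}
      (\<lambda>l. complex_of_real (chi l * sin (t * l^2) / l^2) * leadKer V a x y)"

end

theory Submission
  imports Defs "HOL-Probability.Sinc_Integral"
begin

text \<open>K_{t,4}(x, y) factors into the scalar integral of \<chi>(\<lambda>) sin(t \<lambda>^2) / \<lambda>^2 over \<lambda> > 0,
  which is at most sup |\<chi>| times the integral of min(|t|, \<lambda>^(-2)), i.e. O(|t|^(1/2)), and
  the \<lambda>-independent kernel of G_0 v S_2 A S_2 v G_0, which is bounded uniformly in x and y:
  A is absolutely bounded, and since S_2 v = 0 the projection S_2 (v G_0(x, .)) equals the
  projection of v (G_0(x, .) - G_0(x, 0)), whose L^2 norm is at most that of |w| v(w).
  The projection S_2 exists because ker T_1 is a complete subspace of L^2: every f in ker QTQ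
  satisfies f = U v (coeff_v f - G_0 v f) a.e., and both functionals on the right are continuous,
  so Cauchy sequences converge pointwise to an explicit limit.\<close>

lemma L2_borel_measurable [measurable_dest]: "f \<in> L2 \<Longrightarrow> f \<in> borel_measurable lborel"
  by (simp add: L2_def)

lemma integrable_L2_square: "f \<in> L2 \<Longrightarrow> integrable lborel (\<lambda>x. (f x)^2)"
  by (simp add: L2_def)

lemma L2I: "f \<in> borel_measurable lborel \<Longrightarrow> integrable lborel (\<lambda>x. (f x)^2) \<Longrightarrow> f \<in> L2"
  by (simp add: L2_def)

lemma integrable_L2_mult:
  assumes "f \<in> L2" "g \<in> L2"
  shows "integrable lborel (\<lambda>x. f x * g x)"
proof (rule Bochner_Integration.integrable_bound[of _ "\<lambda>x. (f x)^2 + (g x)^2"])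
  show "integrable lborel (\<lambda>x. (f x)\<^sup>2 + (g x)\<^sup>2)" using assms by (simp add: integrable_L2_square)
  show "(\<lambda>x. f x * g x) \<in> borel_measurable lborel" using assms by measurable
  have "\<bar>f x * g x\<bar> \<le> (f x)^2 + (g x)^2" for x
    using sum_squares_bound[of "\<bar>f x\<bar>" "\<bar>g x\<bar>"]
      mult_nonneg_nonneg[OF abs_ge_zero abs_ge_zero, of "f x" "g x"]
    unfolding abs_mult power2_abs by linarith
  then show "AE x in lborel. norm (f x * g x) \<le> norm ((f x)\<^sup>2 + (g x)\<^sup>2)"
    by simp
qed

lemma L2_zero [simp]: "(\<lambda>x. 0) \<in> L2"
  by (simp add: L2_def)

lemma L2_add:
  assumes "f \<in> L2" "g \<in> L2"
  shows "(\<lambda>x. f x + g x) \<in> L2"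
proof (rule L2I)
  show "(\<lambda>x. f x + g x) \<in> borel_measurable lborel" using assms by measurable
  have "integrable lborel (\<lambda>x. (f x)^2 + 2 * (f x * g x) + (g x)^2)"
    using assms integrable_L2_mult integrable_L2_square by auto
  then show "integrable lborel (\<lambda>x. (f x + g x)\<^sup>2)"
    by (simp add: power2_sum algebra_simps)
qed

lemma L2_cmult:
  assumes "f \<in> L2"
  shows "(\<lambda>x. c * f x) \<in> L2"
proof -
  have [measurable]: "f \<in> borel_measurable lborel" using assms by (rule L2_borel_measurable)
  show ?thesis using assms by (auto intro!: L2I simp: power_mult_distrib integrable_L2_square)
qed

lemma L2_diff:
  assumes "f \<in> L2" "g \<in> L2"
  shows "(\<lambda>x. f x - g x) \<in> L2"
  using L2_add[OF assms(1) L2_cmult[OF assms(2), of "-1"]] by simp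

lemma L2_add_cmult:
  assumes "f \<in> L2" "g \<in> L2"
  shows "(\<lambda>x. f x + c * g x) \<in> L2"
  using L2_add[OF assms(1) L2_cmult[OF assms(2)]] by simp

lemma ip_commute: "ip f g = ip g f"
  by (simp add: ip_def mult.commute)

lemma ip_add_left:
  assumes "f \<in> L2" "g \<in> L2" "k \<in> L2"
  shows "ip (\<lambda>x. f x + g x) k = ip f k + ip g k"
  using assms by (simp add: ip_def distrib_right integrable_L2_mult)

lemma ip_cmult_left: "ip (\<lambda>x. c * f x) k = c * ip f k"
  by (simp add: ip_def mult.assoc)

lemma ip_cmult_right: "ip k (\<lambda>x. c * f x) = c * ip k f"
  using ip_cmult_left by (simp add: ip_commute)

lemma ip_diff_left:
  assumes "f \<in> L2" "g \<in> L2" "k \<in> L2"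
  shows "ip (\<lambda>x. f x - g x) k = ip f k - ip g k"
  using ip_add_left[OF assms(1) L2_cmult[OF assms(2), of "-1"] assms(3)] ip_cmult_left[of "-1" g k]
  by simp

lemma ip_add_right:
  assumes "f \<in> L2" "g \<in> L2" "k \<in> L2"
  shows "ip k (\<lambda>x. f x + g x) = ip k f + ip k g"
  using ip_add_left[OF assms] by (simp add: ip_commute)

lemma ip_diff_right:
  assumes "f \<in> L2" "g \<in> L2" "k \<in> L2"
  shows "ip k (\<lambda>x. f x - g x) = ip k f - ip k g"
  using ip_diff_left[OF assms] by (simp add: ip_commute)

lemma ip_self_eq_integral: "ip f f = (\<integral>x. (f x)^2 \<partial>lborel)"
  by (simp add: ip_def power2_eq_square)

lemma ip_self_nonneg: "0 \<le> ip f f"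
  by (simp add: ip_def)

lemma L2norm_eq_sqrt_ip: "L2norm f = sqrt (ip f f)"
  by (simp add: L2norm_def ip_self_eq_integral)

lemma L2norm_nonneg: "0 \<le> L2norm f"
  by (simp add: L2norm_def)

lemma ip_cong_AE:
  assumes "AE x in lborel. f x = g x" "f \<in> borel_measurable lborel"
    "g \<in> borel_measurable lborel" "k \<in> borel_measurable lborel"
  shows "ip f k = ip g k"
  unfolding ip_def using assms by (intro integral_cong_AE) auto

lemma discriminant_le_if_quadratic_nonneg:
  fixes F B G :: real
  assumes "\<And>s. 0 \<le> F - 2 * s * B + s^2 * G" "0 \<le> G"
  shows "B^2 \<le> F * G"
proof (cases "G = 0")
  case True
  have "B = 0"
  proof (rule ccontr)
    assume "B \<noteq> 0"
    have "0 \<le> F - 2 * ((F + 1) / (2*B)) * B" using assms(1)[of "(F+1)/(2*B)"] True by simp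
    with \<open>B \<noteq> 0\<close> show False by (simp add: field_simps)
  qed
  then show ?thesis using True by simp
next
  case False
  then have "G > 0" using assms(2) by simp
  have "0 \<le> F - 2 * (B/G) * B + (B/G)^2 * G" by (rule assms(1))
  also have "\<dots> = F - B^2/G" using \<open>G > 0\<close> by (simp add: field_simps power2_eq_square)
  finally show ?thesis using \<open>G > 0\<close> by (simp add: field_simps)
qed

lemma ip_diff_cmult_self:
  assumes "f \<in> L2" "g \<in> L2"
  shows "ip (\<lambda>x. f x - s * g x) (\<lambda>x. f x - s * g x) = ip f f - 2 * s * ip f g + s^2 * ip g g"
proof -
  have sg: "(\<lambda>x. s * g x) \<in> L2" using assms L2_cmult by auto
  have "ip (\<lambda>x. f x - s * g x) (\<lambda>x. f x - s * g x)
      = ip f (\<lambda>x. f x - s * g x) - ip (\<lambda>x. s * g x) (\<lambda>x. f x - s * g x)"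
    using assms sg L2_diff by (simp add: ip_diff_left)
  also have "\<dots> = (ip f f - s * ip f g) - s * (ip g f - s * ip g g)"
    using assms sg by (simp add: ip_diff_right ip_cmult_left ip_cmult_right)
  finally show ?thesis by (simp add: ip_commute[of g f] power2_eq_square algebra_simps)
qed

lemma ip_Cauchy_Schwarz:
  assumes "f \<in> L2" "g \<in> L2"
  shows "(ip f g)^2 \<le> ip f f * ip g g"
  by (rule discriminant_le_if_quadratic_nonneg)
    (use ip_diff_cmult_self[OF assms] ip_self_nonneg in \<open>metis\<close>)+

lemma abs_ip_le_L2norm:
  assumes "f \<in> L2" "g \<in> L2"
  shows "\<bar>ip f g\<bar> \<le> L2norm f * L2norm g"
proof -
  have "\<bar>ip f g\<bar> = sqrt ((ip f g)^2)" by simp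
  also have "\<dots> \<le> sqrt (ip f f * ip g g)"
    using ip_Cauchy_Schwarz[OF assms] by (rule real_sqrt_le_mono)
  finally show ?thesis by (simp add: L2norm_eq_sqrt_ip real_sqrt_mult)
qed

lemma L2norm_triangle:
  assumes "f \<in> L2" "g \<in> L2"
  shows "L2norm (\<lambda>x. f x + g x) \<le> L2norm f + L2norm g"
proof -
  have "ip (\<lambda>x. f x + g x) (\<lambda>x. f x + g x) = ip f f + 2 * ip f g + ip g g"
    using assms L2_add by (simp add: ip_add_left ip_add_right ip_commute[of g f])
  also have "\<dots> \<le> (L2norm f + L2norm g)^2"
    using abs_ip_le_L2norm[OF assms]
    by (simp add: L2norm_eq_sqrt_ip power2_sum ip_self_nonneg)
  finally show ?thesis
    using real_sqrt_le_mono by (fastforce simp: L2norm_eq_sqrt_ip[of "\<lambda>x. f x + g x"]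
        L2norm_nonneg)
qed

lemma L2norm_cmult: "L2norm (\<lambda>x. c * f x) = \<bar>c\<bar> * L2norm f"
  by (simp add: L2norm_eq_sqrt_ip ip_cmult_left ip_cmult_right real_sqrt_mult
      mult.assoc[symmetric] power2_eq_square[symmetric])

lemma L2norm_zero_imp_AE_zero:
  assumes "f \<in> L2" "L2norm f = 0"
  shows "AE x in lborel. f x = 0"
proof -
  have "(\<integral>x. (f x)^2 \<partial>lborel) = 0" using assms(2) by (simp add: L2norm_def)
  then have "AE x in lborel. (f x)^2 = 0"
    using integral_nonneg_eq_0_iff_AE[OF integrable_L2_square[OF assms(1)]] by simp
  then show ?thesis by simp
qed

lemma L2_and_L2norm_le_if_AE_abs_le:
  assumes "\<phi> \<in> borel_measurable lborel" "\<psi> \<in> L2" "AE x in lborel. \<bar>\<phi> x\<bar> \<le> \<bar>\<psi> x\<bar>"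
  shows "\<phi> \<in> L2" "L2norm \<phi> \<le> L2norm \<psi>"
proof -
  have sq: "AE x in lborel. (\<phi> x)^2 \<le> (\<psi> x)^2"
    using assms(3) by eventually_elim (simp add: abs_le_square_iff)
  show L: "\<phi> \<in> L2"
    by (rule L2I[OF assms(1)], rule Bochner_Integration.integrable_bound
        [OF integrable_L2_square[OF assms(2)]]) (use assms(1) sq in auto)
  have "(\<integral>x. (\<phi> x)^2 \<partial>lborel) \<le> (\<integral>x. (\<psi> x)^2 \<partial>lborel)"
    using integrable_L2_square[OF L] integrable_L2_square[OF assms(2)] sq
    by (intro integral_mono_AE) auto
  then show "L2norm \<phi> \<le> L2norm \<psi>" by (simp add: L2norm_def)
qed

definition L2_Cauchy :: "(nat \<Rightarrow> pt \<Rightarrow> real) \<Rightarrow> bool" where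
  "L2_Cauchy f \<longleftrightarrow> (\<forall>e>0. \<exists>N. \<forall>m\<ge>N. \<forall>n\<ge>N. L2norm (\<lambda>x. f m x - f n x) < e)"

lemma convergent_if_Lipschitz_L2_Cauchy:
  fixes X :: "nat \<Rightarrow> real"
  assumes "L2_Cauchy f" "0 \<le> K" "\<And>m n. \<bar>X m - X n\<bar> \<le> K * L2norm (\<lambda>x. f m x - f n x)"
  shows "convergent X"
proof -
  have "Cauchy X"
  proof (rule metric_CauchyI)
    fix e :: real
    assume "e > 0"
    then obtain N where N: "\<forall>m\<ge>N. \<forall>n\<ge>N. L2norm (\<lambda>x. f m x - f n x) < e / (K + 1)"
      using assms(1,2) unfolding L2_Cauchy_def by (meson add_nonneg_pos divide_pos_pos zero_less_one)
    have "dist (X m) (X n) < e" if "N \<le> m" "N \<le> n" for m n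
    proof -
      have "\<bar>X m - X n\<bar> \<le> K * (e / (K + 1))"
        using N that by (intro order_trans[OF assms(3)] mult_left_mono assms(2)) (simp add: less_imp_le)
      also have "\<dots> < e" using assms(2) \<open>e > 0\<close> by (simp add: field_simps)
      finally show ?thesis by (simp add: dist_real_def)
    qed
    then show "\<exists>M. \<forall>m\<ge>M. \<forall>n\<ge>M. dist (X m) (X n) < e" by blast
  qed
  then show ?thesis by (simp add: Cauchy_convergent_iff)
qed

lemma tendsto_if_L2norm_diff_tendsto_zero:
  assumes "(\<lambda>n. L2norm (\<lambda>x. f n x - F x)) \<longlonglongrightarrow> 0"
    and "\<And>n. \<bar>X n - c\<bar> \<le> K * L2norm (\<lambda>x. f n x - F x)"
  shows "X \<longlonglongrightarrow> (c :: real)"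
proof -
  have "(\<lambda>n. X n - c) \<longlonglongrightarrow> 0"
    using assms(2) by (intro Lim_null_comparison[OF _ tendsto_mult_right_zero[OF assms(1), of K]]) auto
  then show ?thesis by (simp add: LIM_zero_iff)
qed

lemma ip_tendsto_if_L2norm_diff_tendsto_zero:
  assumes "(\<lambda>n. L2norm (\<lambda>x. f n x - F x)) \<longlonglongrightarrow> 0" "\<And>n. f n \<in> L2" "F \<in> L2" "g \<in> L2"
  shows "(\<lambda>n. ip g (f n)) \<longlonglongrightarrow> ip g F"
proof (rule tendsto_if_L2norm_diff_tendsto_zero[OF assms(1)])
  fix n
  have "ip g (f n) - ip g F = ip g (\<lambda>x. f n x - F x)"
    using assms(2-4) by (simp add: ip_diff_right)
  then show "\<bar>ip g (f n) - ip g F\<bar> \<le> L2norm g * L2norm (\<lambda>x. f n x - F x)"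
    using abs_ip_le_L2norm[OF assms(4) L2_diff[OF assms(2,3)]] by simp
qed

section \<open>Orthogonal projection onto complete subspaces\<close>

definition L2_subspace :: "(pt \<Rightarrow> real) set \<Rightarrow> bool" where
  "L2_subspace X \<longleftrightarrow> X \<subseteq> L2 \<and> (\<lambda>x. 0) \<in> X \<and> (\<forall>f\<in>X. \<forall>g\<in>X. \<forall>c. (\<lambda>x. f x + c * g x) \<in> X)"

definition L2_complete :: "(pt \<Rightarrow> real) set \<Rightarrow> bool" where
  "L2_complete X \<longleftrightarrow> (\<forall>f. (\<forall>n. f n \<in> X) \<and> L2_Cauchy f \<longrightarrow>
     (\<exists>F\<in>X. (\<lambda>n. L2norm (\<lambda>x. f n x - F x)) \<longlonglongrightarrow> 0))"

definition L2_sqdist :: "(pt \<Rightarrow> real) \<Rightarrow> (pt \<Rightarrow> real) \<Rightarrow> real" where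
  "L2_sqdist f g = ip (\<lambda>x. f x - g x) (\<lambda>x. f x - g x)"

lemma L2_sqdist_nonneg: "0 \<le> L2_sqdist f g"
  by (simp add: L2_sqdist_def ip_self_nonneg)

lemma sqrt_L2_sqdist: "sqrt (L2_sqdist f g) = L2norm (\<lambda>x. f x - g x)"
  by (simp add: L2_sqdist_def L2norm_eq_sqrt_ip)

lemma L2_subspaceD:
  assumes "L2_subspace X"
  shows "X \<subseteq> L2" "(\<lambda>x. 0) \<in> X" "\<And>f g c. f \<in> X \<Longrightarrow> g \<in> X \<Longrightarrow> (\<lambda>x. f x + c * g x) \<in> X"
  using assms by (auto simp: L2_subspace_def)

lemma L2_subspace_midpoint:
  assumes X: "L2_subspace X" and "f \<in> X" "g \<in> X"
  shows "(\<lambda>x. (f x + g x) / 2) \<in> X"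
proof -
  have "(\<lambda>x. f x + (1/2) * (g x + (- 1) * f x)) \<in> X"
    using assms by (intro L2_subspaceD(3)[OF X]) auto
  moreover have "(\<lambda>x. f x + (1/2) * (g x + (- 1) * f x)) = (\<lambda>x. (f x + g x) / 2)"
    by (auto simp: field_simps)
  ultimately show ?thesis by simp
qed

lemma L2_sqdist_parallelogram:
  assumes "h \<in> L2" "p \<in> L2" "q \<in> L2"
  shows "L2_sqdist p q = 2 * L2_sqdist h p + 2 * L2_sqdist h q - 4 * L2_sqdist h (\<lambda>x. (p x + q x) / 2)"
proof -
  have m: "(\<lambda>x. (p x + q x) / 2) \<in> L2"
    using L2_cmult[OF L2_add[OF assms(2,3)], of "1/2"] by simp
  have "(p x - q x)^2 = 2 * (h x - p x)^2 + 2 * (h x - q x)^2 - 4 * (h x - (p x + q x) / 2)^2" for x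
    by (simp add: power2_eq_square field_simps)
  moreover have "integrable lborel (\<lambda>x. (h x - k x)^2)" if "k \<in> L2" for k
    using integrable_L2_square L2_diff assms(1) that by blast
  ultimately show ?thesis
    using assms m by (simp add: L2_sqdist_def ip_self_eq_integral)
qed

lemma L2_Cauchy_if_minimizing:
  assumes X: "L2_subspace X" and h: "h \<in> L2" and gX: "\<And>n. g n \<in> X"
    and d: "\<And>k. k \<in> X \<Longrightarrow> d \<le> L2_sqdist h k"
    and gd: "\<And>n. L2_sqdist h (g n) < d + inverse (real (Suc n))"
  shows "L2_Cauchy g"
  unfolding L2_Cauchy_def
proof (intro allI impI)
  fix e :: real
  assume e: "e > 0"
  have gL2: "g n \<in> L2" for n using gX L2_subspaceD(1)[OF X] by auto
  have close: "L2_sqdist (g n) (g m) < 2 * inverse (real (Suc n)) + 2 * inverse (real (Suc m))"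
    for n m
  proof -
    have "L2_sqdist (g n) (g m)
        = 2 * L2_sqdist h (g n) + 2 * L2_sqdist h (g m) - 4 * L2_sqdist h (\<lambda>x. (g n x + g m x) / 2)"
      by (rule L2_sqdist_parallelogram[OF h gL2 gL2])
    also have "\<dots> \<le> 2 * L2_sqdist h (g n) + 2 * L2_sqdist h (g m) - 4 * d"
      using d[OF L2_subspace_midpoint[OF X gX gX]] by simp
    finally show ?thesis using gd[of n] gd[of m] by simp
  qed
  have "eventually (\<lambda>n. inverse (real (Suc n)) < e^2 / 4) sequentially"
    using e by (intro order_tendstoD(2)[OF LIMSEQ_inverse_real_of_nat]) simp
  then obtain N where N: "inverse (real (Suc N)) < e^2 / 4"
    unfolding eventually_sequentially by blast
  have "L2norm (\<lambda>x. g m x - g n x) < e" if "N \<le> m" "N \<le> n" for m n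
  proof -
    have "inverse (real (Suc m)) \<le> inverse (real (Suc N))" "inverse (real (Suc n)) \<le> inverse (real (Suc N))"
      using that by (simp_all add: field_simps)
    then have "L2_sqdist (g m) (g n) < e^2" using close[of m n] N by linarith
    then show ?thesis using e real_sqrt_less_mono by (fastforce simp: sqrt_L2_sqdist[symmetric])
  qed
  then show "\<exists>N. \<forall>m\<ge>N. \<forall>n\<ge>N. L2norm (\<lambda>x. g m x - g n x) < e" by blast
qed

lemma orthogonal_if_minimizer:
  assumes X: "L2_subspace X" and h: "h \<in> L2" and F: "F \<in> X" and k: "k \<in> X"
    and min: "\<And>g. g \<in> X \<Longrightarrow> L2_sqdist h F \<le> L2_sqdist h g"
  shows "ip (\<lambda>x. h x - F x) k = 0"
proof -
  have kL2: "k \<in> L2" and hF: "(\<lambda>x. h x - F x) \<in> L2"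
    using F k h L2_diff L2_subspaceD(1)[OF X] by auto
  have "0 \<le> 0 - 2 * s * ip (\<lambda>x. h x - F x) k + s^2 * ip k k" for s
  proof -
    have "L2_sqdist h F \<le> L2_sqdist h (\<lambda>x. F x + s * k x)"
      using F k by (intro min L2_subspaceD(3)[OF X])
    also have "L2_sqdist h (\<lambda>x. F x + s * k x) = ip (\<lambda>x. (h x - F x) - s * k x) (\<lambda>x. (h x - F x) - s * k x)"
      by (simp add: L2_sqdist_def algebra_simps)
    also have "\<dots> = L2_sqdist h F - 2 * s * ip (\<lambda>x. h x - F x) k + s^2 * ip k k"
      using ip_diff_cmult_self[OF hF kL2, of s] by (simp add: L2_sqdist_def)
    finally show ?thesis by simp
  qed
  then have "(ip (\<lambda>x. h x - F x) k)^2 \<le> 0 * ip k k"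
    by (intro discriminant_le_if_quadratic_nonneg) (auto simp: ip_self_nonneg)
  then show ?thesis by simp
qed

lemma orthogonal_projection_exists:
  assumes X: "L2_subspace X" and complete: "L2_complete X" and h: "h \<in> L2"
  shows "\<exists>g\<in>X. \<forall>k\<in>X. ip (\<lambda>x. h x - g x) k = 0"
proof -
  define d where "d = Inf (L2_sqdist h ` X)"
  have bdd: "bdd_below (L2_sqdist h ` X)"
    by (intro bdd_belowI[of _ 0]) (auto simp: L2_sqdist_nonneg)
  have ne: "L2_sqdist h ` X \<noteq> {}" using L2_subspaceD(2)[OF X] by auto
  have d_le: "d \<le> L2_sqdist h k" if "k \<in> X" for k
    unfolding d_def using bdd that by (auto intro: cInf_lower)
  have "\<forall>n. \<exists>g\<in>X. L2_sqdist h g < d + inverse (real (Suc n))"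
  proof
    fix n
    have "Inf (L2_sqdist h ` X) < d + inverse (real (Suc n))" unfolding d_def by simp
    from cInf_lessD[OF ne this] show "\<exists>g\<in>X. L2_sqdist h g < d + inverse (real (Suc n))" by auto
  qed
  then obtain g where gX: "\<And>n. g n \<in> X" and gd: "\<And>n. L2_sqdist h (g n) < d + inverse (real (Suc n))"
    by metis
  obtain F where FX: "F \<in> X" and lim: "(\<lambda>n. L2norm (\<lambda>x. g n x - F x)) \<longlonglongrightarrow> 0"
    using complete L2_Cauchy_if_minimizing[OF X h gX d_le gd] gX unfolding L2_complete_def by blast
  have gL2: "g n \<in> L2" for n
    using gX L2_subspaceD(1)[OF X] by auto
  have FL2: "F \<in> L2" using FX L2_subspaceD(1)[OF X] by auto
  have "sqrt (L2_sqdist h F) \<le> sqrt (d + inverse (real (Suc n))) + L2norm (\<lambda>x. g n x - F x)" for n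
  proof -
    have "sqrt (L2_sqdist h F) = L2norm (\<lambda>x. (h x - g n x) + (g n x - F x))"
      by (simp add: sqrt_L2_sqdist)
    also have "\<dots> \<le> sqrt (L2_sqdist h (g n)) + L2norm (\<lambda>x. g n x - F x)"
      unfolding sqrt_L2_sqdist using h gL2 FL2 by (intro L2norm_triangle L2_diff)
    also have "sqrt (L2_sqdist h (g n)) \<le> sqrt (d + inverse (real (Suc n)))"
      using gd[of n] by simp
    finally show ?thesis by simp
  qed
  moreover have "(\<lambda>n. sqrt (d + inverse (real (Suc n))) + L2norm (\<lambda>x. g n x - F x))
      \<longlonglongrightarrow> sqrt (d + 0) + 0"
    by (intro tendsto_intros LIMSEQ_inverse_real_of_nat lim)
  ultimately have "sqrt (L2_sqdist h F) \<le> sqrt (d + 0) + 0"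
    by (intro LIMSEQ_le_const) auto
  then have "L2_sqdist h F \<le> L2_sqdist h k" if "k \<in> X" for k
    using d_le[OF that] by simp
  then show ?thesis using orthogonal_if_minimizer[OF X h FX] FX by blast
qed

lemma orthproj:
  assumes "L2_subspace X" "L2_complete X" "h \<in> L2"
  shows "orthproj X h \<in> X" "\<And>k. k \<in> X \<Longrightarrow> ip (\<lambda>x. h x - orthproj X h x) k = 0"
  using someI_ex[OF orthogonal_projection_exists[OF assms, unfolded Bex_def]]
  by (simp_all add: orthproj_def)

lemma L2norm_orthproj_le:
  assumes X: "L2_subspace X" "L2_complete X" and h: "h \<in> L2" and h': "h' \<in> L2"
    and same: "\<And>k. k \<in> X \<Longrightarrow> ip h k = ip h' k"
  shows "L2norm (orthproj X h) \<le> L2norm h'"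
proof -
  define g where "g = orthproj X h"
  have gX: "g \<in> X" and gL2: "g \<in> L2"
    using orthproj[OF X h] L2_subspaceD(1)[OF X(1)] by (auto simp: g_def)
  have "ip g g = ip h g"
    using orthproj(2)[OF X h gX] h gL2 by (simp add: g_def ip_diff_left)
  also have "\<dots> = ip h' g" using same[OF gX] .
  also have "\<dots> \<le> L2norm h' * L2norm g" using abs_ip_le_L2norm[OF h' gL2] by simp
  finally have "(L2norm g)^2 \<le> L2norm h' * L2norm g"
    by (simp add: L2norm_eq_sqrt_ip ip_self_nonneg)
  then show ?thesis
    using L2norm_nonneg[of g] L2norm_nonneg[of h']
    by (cases "L2norm g = 0") (auto simp: g_def power2_eq_square)
qed

section \<open>Integral operators with square-integrable kernels\<close>

locale kernel_operator =
  fixes w :: "pt \<Rightarrow> real" and k :: "pt \<Rightarrow> pt \<Rightarrow> real" and B :: "pt \<Rightarrow> real"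
  assumes w_measurable [measurable]: "w \<in> borel_measurable lborel"
    and k_measurable [measurable]: "(\<lambda>(x, y). k x y) \<in> borel_measurable (lborel \<Otimes>\<^sub>M lborel)"
    and k_L2: "\<And>x. k x \<in> L2"
    and ip_k_self_le: "\<And>x. ip (k x) (k x) \<le> B x"
    and integrable_w_square_B: "integrable lborel (\<lambda>x. (w x)^2 * B x)"
begin

definition "HS = (\<integral>x. (w x)^2 * B x \<partial>lborel)"

lemma HS_nonneg: "0 \<le> HS"
proof -
  have "0 \<le> (w x)^2 * B x" for x
    using ip_k_self_le[of x] ip_self_nonneg[of "k x"] by simp
  then show ?thesis unfolding HS_def by (simp add: integral_nonneg)
qed

lemma ip_k_measurable [measurable]:
  assumes "f \<in> L2"
  shows "(\<lambda>x. ip (k x) f) \<in> borel_measurable lborel"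
proof -
  have [measurable]: "f \<in> borel_measurable lborel" using assms by (rule L2_borel_measurable)
  have "(\<lambda>x. \<integral>y. k x y * f y \<partial>lborel) \<in> borel_measurable lborel"
    by (rule lborel.borel_measurable_lebesgue_integral) measurable
  then show ?thesis unfolding ip_def .
qed

lemma abs_ip_k_le:
  assumes "f \<in> L2"
  shows "\<bar>ip (k x) f\<bar> \<le> sqrt (B x) * L2norm f"
proof -
  have "L2norm (k x) \<le> sqrt (B x)"
    unfolding L2norm_eq_sqrt_ip using ip_k_self_le by simp
  then show ?thesis
    using abs_ip_le_L2norm[OF k_L2 assms] L2norm_nonneg[of f] by (meson mult_right_mono order_trans)
qed

lemma ip_k_diff:
  assumes "f \<in> L2" "g \<in> L2"
  shows "ip (k x) (\<lambda>y. f y - g y) = ip (k x) f - ip (k x) g"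
  using assms k_L2 by (simp add: ip_diff_right)

lemma ip_k_add_cmult:
  assumes "f \<in> L2" "g \<in> L2"
  shows "ip (k x) (\<lambda>y. f y + c * g y) = ip (k x) f + c * ip (k x) g"
  using assms k_L2 L2_cmult by (simp add: ip_add_right ip_cmult_right)

lemma apply_square_le:
  assumes "f \<in> L2"
  shows "(w x * ip (k x) f)^2 \<le> (w x)^2 * B x * ip f f"
proof -
  have "(ip (k x) f)^2 \<le> ip (k x) (k x) * ip f f" by (rule ip_Cauchy_Schwarz[OF k_L2 assms])
  also have "\<dots> \<le> B x * ip f f" using ip_k_self_le ip_self_nonneg by (intro mult_right_mono) auto
  finally have "(w x)^2 * (ip (k x) f)^2 \<le> (w x)^2 * (B x * ip f f)"
    by (intro mult_left_mono) auto
  then show ?thesis by (simp add: power_mult_distrib mult.assoc)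
qed

lemma apply_L2:
  assumes "f \<in> L2"
  shows "(\<lambda>x. w x * ip (k x) f) \<in> L2"
proof (rule L2I)
  show "(\<lambda>x. w x * ip (k x) f) \<in> borel_measurable lborel" using assms by measurable
  show "integrable lborel (\<lambda>x. (w x * ip (k x) f)\<^sup>2)"
  proof (rule Bochner_Integration.integrable_bound[of _ "\<lambda>x. (w x)^2 * B x * ip f f"])
    show "integrable lborel (\<lambda>x. (w x)\<^sup>2 * B x * ip f f)"
      using integrable_w_square_B by simp
    show "(\<lambda>x. (w x * ip (k x) f)\<^sup>2) \<in> borel_measurable lborel" using assms by measurable
    show "AE x in lborel. norm ((w x * ip (k x) f)\<^sup>2) \<le> norm ((w x)\<^sup>2 * B x * ip f f)"
      using apply_square_le[OF assms] by (auto intro: order_trans[OF _ abs_ge_self])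
  qed
qed

lemma L2norm_apply_le:
  assumes "f \<in> L2"
  shows "L2norm (\<lambda>x. w x * ip (k x) f) \<le> sqrt HS * L2norm f"
proof -
  have "ip (\<lambda>x. w x * ip (k x) f) (\<lambda>x. w x * ip (k x) f) = (\<integral>x. (w x * ip (k x) f)^2 \<partial>lborel)"
    by (simp add: ip_self_eq_integral)
  also have "\<dots> \<le> (\<integral>x. (w x)^2 * B x * ip f f \<partial>lborel)"
    using apply_L2[OF assms] integrable_w_square_B apply_square_le[OF assms]
    by (intro integral_mono) (auto simp: integrable_L2_square)
  also have "\<dots> = HS * ip f f" by (simp add: HS_def)
  finally show ?thesis
    by (simp add: L2norm_eq_sqrt_ip real_sqrt_mult[symmetric])
qed

end

section \<open>Potentials with polynomial decay\<close>

definition cauchy_weight :: "pt \<Rightarrow> real" where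
  "cauchy_weight x = (\<Prod>b\<in>Basis. inverse (1 + (x \<bullet> b)^2))"

lemma cauchy_weight_measurable [measurable]: "cauchy_weight \<in> borel_measurable lborel"
  unfolding cauchy_weight_def by measurable

lemma cauchy_weight_nonneg: "0 \<le> cauchy_weight x"
  unfolding cauchy_weight_def by (auto intro: prod_nonneg)

lemma integrable_cauchy_weight: "integrable lborel cauchy_weight"
proof -
  have "integrable lborel (\<lambda>t::real. inverse (1 + t^2))"
    using integrable_inverse_1_plus_square by (simp add: set_integrable_def einterval_eq_UNIV)
  then have fin: "(\<integral>\<^sup>+t. ennreal (inverse (1 + t^2)) \<partial>lborel) < \<infinity>"
    by (simp add: integrable_iff_bounded)
  have "(\<integral>\<^sup>+x. ennreal (cauchy_weight x) \<partial>lborel)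
      = (\<integral>\<^sup>+x. (\<Prod>b\<in>Basis. ennreal (inverse (1 + (x \<bullet> b)^2))) \<partial>(lborel::pt measure))"
    unfolding cauchy_weight_def by (subst prod_ennreal) auto
  also have "\<dots> = (\<Prod>b\<in>(Basis :: pt set). (\<integral>\<^sup>+t. ennreal (inverse (1 + t^2)) \<partial>lborel))"
    by (rule nn_integral_lborel_prod) auto
  also have "\<dots> < \<infinity>"
    using fin by (simp add: power_less_top_ennreal)
  finally show ?thesis using cauchy_weight_nonneg by (intro integrableI_nonneg) auto
qed

lemma inverse_power_le_cauchy_weight: "inverse ((1 + norm x)^6) \<le> cauchy_weight x"
proof -
  have "(\<Prod>b\<in>(Basis::pt set). 1 + (x \<bullet> b)^2) \<le> (\<Prod>b\<in>(Basis::pt set). (1 + norm x)^2)"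
  proof (rule prod_mono)
    fix b :: pt
    assume "b \<in> Basis"
    then have "(x \<bullet> b)^2 \<le> (norm x)^2"
      using Basis_le_norm by (metis abs_ge_zero power2_abs power_mono)
    then show "0 \<le> 1 + (x \<bullet> b)^2 \<and> 1 + (x \<bullet> b)^2 \<le> (1 + norm x)^2"
      by (simp add: power2_sum) (use norm_ge_zero[of x] in linarith)
  qed
  then have le: "(\<Prod>b\<in>(Basis::pt set). 1 + (x \<bullet> b)^2) \<le> (1 + norm x)^6" by simp
  have pos: "0 < (\<Prod>b\<in>(Basis::pt set). 1 + (x \<bullet> b)^2)"
    by (intro prod_pos) (simp add: add_pos_nonneg)
  have "inverse ((1 + norm x)^6) \<le> inverse (\<Prod>b\<in>(Basis::pt set). 1 + (x \<bullet> b)^2)"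
    using le pos by (intro le_imp_inverse_le) auto
  also have "\<dots> = cauchy_weight x"
    unfolding cauchy_weight_def by (simp add: prod_inversef[symmetric] o_def)
  finally show ?thesis .
qed

lemma decay_imp_cauchy_weight_bound:
  assumes "\<exists>\<epsilon>>0. \<exists>C. \<forall>x. \<bar>V x\<bar> \<le> C * (1 + norm x) powr (-19 - \<epsilon>)"
  shows "\<exists>C\<ge>0. \<forall>x. \<bar>V x\<bar> * (1 + norm x)^4 \<le> C * cauchy_weight x"
proof -
  obtain \<epsilon> C where e: "\<epsilon> > 0" and C: "\<And>x. \<bar>V x\<bar> \<le> C * (1 + norm x) powr (-19 - \<epsilon>)"
    using assms by blast
  have "\<bar>V x\<bar> * (1 + norm x)^4 \<le> max C 0 * cauchy_weight x" for x
  proof -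
    have b1: "1 \<le> 1 + norm x" by simp
    have "(1 + norm x) powr (-19 - \<epsilon>) \<le> (1 + norm x) powr (-10)"
      using e b1 by (intro powr_mono) auto
    also have "\<dots> = inverse ((1 + norm x)^10)"
      using b1 by (simp add: powr_minus powr_realpow)
    finally have "\<bar>V x\<bar> \<le> max C 0 * inverse ((1 + norm x)^10)"
      using C[of x] by (smt (verit, best) mult_left_mono mult_right_mono powr_ge_zero)
    then have "\<bar>V x\<bar> * (1 + norm x)^4 \<le> max C 0 * inverse ((1 + norm x)^10) * (1 + norm x)^4"
      by (intro mult_right_mono) auto
    also have "\<dots> = max C 0 * inverse ((1 + norm x)^6)"
      using b1 by (simp add: field_simps power_add[symmetric] del: power_add)
        (simp add: eval_nat_numeral)
    also have "\<dots> \<le> max C 0 * cauchy_weight x"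
      using inverse_power_le_cauchy_weight by (intro mult_left_mono) auto
    finally show ?thesis .
  qed
  then show ?thesis by (intro exI[of _ "max C 0"]) auto
qed

lemma norm_diff_le_mult: "norm (x - y) \<le> (1 + norm x) * (1 + norm (y::pt))"
proof -
  have "norm (x - y) \<le> norm x + norm y" by (rule norm_triangle_ineq4)
  also have "\<dots> \<le> (1 + norm x) * (1 + norm y)" by (simp add: algebra_simps)
  finally show ?thesis .
qed

lemma abs_G0_le: "\<bar>G0 x y\<bar> \<le> (1 + norm x)^2 * (1 + norm y)^2"
proof -
  have "norm (x - y) * 1 \<le> norm (x - y) * (8 * pi)"
    using pi_gt3 by (intro mult_left_mono) auto
  then have "\<bar>G0 x y\<bar> \<le> norm (x - y)"
    using pi_gt3 by (simp add: G0_def divide_le_eq)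
  also have "\<dots> \<le> (1 + norm x) * (1 + norm y)" by (rule norm_diff_le_mult)
  also have "\<dots> \<le> (1 + norm x)^2 * (1 + norm y)^2"
  proof -
    have "1 + norm z \<le> (1 + norm z)^2" for z :: pt
      using mult_left_mono[of 1 "1 + norm z" "1 + norm z"] by (simp add: power2_eq_square)
    then show ?thesis by (intro mult_mono) auto
  qed
  finally show ?thesis .
qed

lemma abs_G1_le: "\<bar>G1 x y\<bar> \<le> (1 + norm x)^2 * (1 + norm y)^2"
proof -
  have "\<bar>G1 x y\<bar> = (norm (x - y))^2" by (simp add: G1_def)
  also have "\<dots> \<le> ((1 + norm x) * (1 + norm y))^2"
    by (intro power_mono norm_diff_le_mult) auto
  finally show ?thesis by (simp add: power_mult_distrib)
qed

lemma G0_commute: "G0 x y = G0 y x"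
  by (simp add: G0_def norm_minus_commute)

lemma G0_measurable [measurable]: "(\<lambda>(x, y). G0 x y) \<in> borel_measurable (lborel \<Otimes>\<^sub>M lborel)"
  unfolding G0_def by measurable

lemma G1_measurable [measurable]: "(\<lambda>(x, y). G1 x y) \<in> borel_measurable (lborel \<Otimes>\<^sub>M lborel)"
  unfolding G1_def by measurable

locale decaying_potential =
  fixes V :: "pt \<Rightarrow> real" and C\<^sub>V :: real
  assumes V_measurable [measurable]: "V \<in> borel_measurable lborel"
    and V_weight_bound: "\<And>x. \<bar>V x\<bar> * (1 + norm x)^4 \<le> C\<^sub>V * cauchy_weight x"
begin

abbreviation "v \<equiv> vfun V"
abbreviation "U \<equiv> Ufun V"
abbreviation "T \<equiv> Top V"
abbreviation "L \<equiv> L1norm V"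

lemma v_measurable [measurable]: "v \<in> borel_measurable lborel"
  unfolding vfun_def by measurable

lemma v_nonneg: "0 \<le> v x"
  by (simp add: vfun_def)

lemma v_square: "(v x)^2 = \<bar>V x\<bar>"
  by (simp add: vfun_def)

lemma integrable_V_moment: "integrable lborel (\<lambda>x. \<bar>V x\<bar> * (1 + norm x)^4)"
proof (rule Bochner_Integration.integrable_bound[of _ "\<lambda>x. C\<^sub>V * cauchy_weight x"])
  show "integrable lborel (\<lambda>x. C\<^sub>V * cauchy_weight x)"
    using integrable_cauchy_weight by simp
  show "(\<lambda>x. \<bar>V x\<bar> * (1 + norm x)^4) \<in> borel_measurable lborel" by measurable
  have "norm (\<bar>V x\<bar> * (1 + norm x)^4) \<le> norm (C\<^sub>V * cauchy_weight x)" for x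
    using order_trans[OF V_weight_bound abs_ge_self, of x] by (simp add: abs_mult)
  then show "AE x in lborel. norm (\<bar>V x\<bar> * (1 + norm x)^4) \<le> norm (C\<^sub>V * cauchy_weight x)"
    by simp
qed

definition "moment = (\<integral>x. \<bar>V x\<bar> * (1 + norm x)^4 \<partial>lborel)"

lemma moment_nonneg: "0 \<le> moment"
  unfolding moment_def by (simp add: integral_nonneg)

lemma L2_mult_v:
  assumes "g \<in> borel_measurable lborel" "\<And>x. (g x)^2 \<le> (1 + norm x)^4"
  shows "(\<lambda>x. g x * v x) \<in> L2"
proof (rule L2I)
  show "(\<lambda>x. g x * v x) \<in> borel_measurable lborel" using assms by measurable
  have "integrable lborel (\<lambda>x. \<bar>V x\<bar> * (g x)^2)"
    by (rule Bochner_Integration.integrable_bound[OF integrable_V_moment])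
      (use assms in \<open>auto simp: abs_mult intro!: mult_left_mono\<close>)
  then show "integrable lborel (\<lambda>x. (g x * v x)^2)"
    by (simp add: power_mult_distrib v_square mult.commute)
qed

lemma L2_v: "v \<in> L2"
  using L2_mult_v[of "\<lambda>x. 1"] by simp

lemma L2_norm_mult_v: "(\<lambda>x. norm x * v x) \<in> L2"
proof (rule L2_mult_v)
  fix x :: pt
  have "(norm x)^2 \<le> (1 + norm x)^2" by (intro power_mono) auto
  also have "\<dots> \<le> (1 + norm x)^4" by (intro power_increasing) auto
  finally show "(norm x)^2 \<le> (1 + norm x)^4" .
qed simp

lemma L2_weight_mult_v: "(\<lambda>x. (1 + norm x)^2 * v x) \<in> L2"
  by (rule L2_mult_v) (auto simp: power_mult[symmetric])

lemma ip_v_v: "ip v v = L"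
  by (simp add: ip_self_eq_integral v_square L1norm_def)

lemma v_AE_zero_if_L1norm_zero:
  assumes "L = 0"
  shows "AE x in lborel. v x = 0"
  using L2norm_zero_imp_AE_zero[OF L2_v] assms by (simp add: L2norm_eq_sqrt_ip ip_v_v)

lemma kernel_operator_mult_v:
  assumes [measurable]: "(\<lambda>(x, y). g x y) \<in> borel_measurable (lborel \<Otimes>\<^sub>M lborel)"
    and g_le: "\<And>x y. \<bar>g x y\<bar> \<le> (1 + norm x)^2 * (1 + norm y)^2"
  shows "kernel_operator v (\<lambda>x y. g x y * v y) (\<lambda>x. (1 + norm x)^4 * moment)"
proof
  show "v \<in> borel_measurable lborel" "(\<lambda>(x, y). g x y * v y) \<in> borel_measurable (lborel \<Otimes>\<^sub>M lborel)"
    by measurable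
  have sq: "(g x y * v y)^2 \<le> (1 + norm x)^4 * (\<bar>V y\<bar> * (1 + norm y)^4)" for x y
  proof -
    have "(g x y)^2 \<le> ((1 + norm x)^2 * (1 + norm y)^2)^2"
      using g_le[of x y] by (metis abs_ge_zero power2_abs power_mono)
    then have "(g x y)^2 * \<bar>V y\<bar> \<le> ((1 + norm x)^2 * (1 + norm y)^2)^2 * \<bar>V y\<bar>"
      by (intro mult_right_mono) auto
    then show ?thesis by (simp add: power_mult_distrib v_square power_mult[symmetric] mult_ac)
  qed
  have [measurable]: "(\<lambda>y. g x y) \<in> borel_measurable lborel" for x
    using measurable_Pair2[OF assms(1)[unfolded split_beta'], of x] by simp
  have int: "integrable lborel (\<lambda>y. (1 + norm x)^4 * (\<bar>V y\<bar> * (1 + norm y)^4))" for x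
    using integrable_V_moment by simp
  show L2: "(\<lambda>y. g x y * v y) \<in> L2" for x
    by (rule L2I, measurable, rule Bochner_Integration.integrable_bound[OF int])
      (use sq in \<open>auto intro: order_trans[OF _ abs_ge_self]\<close>)
  show "ip (\<lambda>y. g x y * v y) (\<lambda>y. g x y * v y) \<le> (1 + norm x)^4 * moment" for x
  proof -
    have "ip (\<lambda>y. g x y * v y) (\<lambda>y. g x y * v y) = (\<integral>y. (g x y * v y)^2 \<partial>lborel)"
      by (simp add: ip_self_eq_integral)
    also have "\<dots> \<le> (\<integral>y. (1 + norm x)^4 * (\<bar>V y\<bar> * (1 + norm y)^4) \<partial>lborel)"
      using integrable_L2_square[OF L2] int sq by (intro integral_mono) auto
    finally show ?thesis by (simp add: moment_def)
  qed
  show "integrable lborel (\<lambda>x. (v x)^2 * ((1 + norm x)^4 * moment))"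
    using integrable_V_moment by (simp add: v_square mult.assoc[symmetric])
qed

sublocale G0: kernel_operator v "\<lambda>x y. G0 x y * v y" "\<lambda>x. (1 + norm x)^4 * moment"
  by (rule kernel_operator_mult_v[OF G0_measurable abs_G0_le])

sublocale G1: kernel_operator v "\<lambda>x y. G1 x y * v y" "\<lambda>x. (1 + norm x)^4 * moment"
  by (rule kernel_operator_mult_v[OF G1_measurable abs_G1_le])

end

section \<open>The zero-energy subspaces\<close>

context decaying_potential
begin

abbreviation "G0v x \<equiv> (\<lambda>y. G0 x y * v y)"

lemma U_square: "U x * U x = 1"
  by (simp add: Ufun_def)

lemma U_abs: "\<bar>U x\<bar> = 1"
  by (simp add: Ufun_def)

lemma U_cancel: "U x * (U x * z) = z"
  using U_square[of x] by (simp add: mult.assoc[symmetric])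

lemma U_measurable [measurable]: "U \<in> borel_measurable lborel"
  unfolding Ufun_def by measurable

lemma Top_eq: "T f = (\<lambda>x. U x * f x + v x * ip (G0v x) f)"
  by (simp add: Top_def ip_def)

lemma vG1v_eq: "vG1v V f = (\<lambda>x. v x * ip (\<lambda>y. G1 x y * v y) f)"
  by (simp add: vG1v_def ip_def)

lemma L2_mult_U:
  assumes "f \<in> L2"
  shows "(\<lambda>x. U x * f x) \<in> L2" "L2norm (\<lambda>x. U x * f x) = L2norm f"
proof -
  have [measurable]: "f \<in> borel_measurable lborel" using assms by (rule L2_borel_measurable)
  have sq: "(\<lambda>x. (U x * f x)^2) = (\<lambda>x. (f x)^2)"
    by (auto simp: power_mult_distrib Ufun_def)
  show "(\<lambda>x. U x * f x) \<in> L2" using assms by (intro L2I) (auto simp: sq integrable_L2_square)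
  show "L2norm (\<lambda>x. U x * f x) = L2norm f" by (simp add: L2norm_def sq)
qed

lemma T_L2: "f \<in> L2 \<Longrightarrow> T f \<in> L2"
  unfolding Top_eq by (intro L2_add L2_mult_U G0.apply_L2)

lemma vG1v_L2: "f \<in> L2 \<Longrightarrow> vG1v V f \<in> L2"
  unfolding vG1v_eq by (rule G1.apply_L2)

lemma L2norm_T_le:
  assumes "f \<in> L2"
  shows "L2norm (T f) \<le> (1 + sqrt G0.HS) * L2norm f"
proof -
  have "L2norm (T f) \<le> L2norm (\<lambda>x. U x * f x) + L2norm (\<lambda>x. v x * ip (G0v x) f)"
    unfolding Top_eq using assms by (intro L2norm_triangle L2_mult_U G0.apply_L2)
  also have "\<dots> \<le> L2norm f + sqrt G0.HS * L2norm f"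
    using G0.L2norm_apply_le[OF assms] by (simp add: L2_mult_U[OF assms])
  finally show ?thesis by (simp add: algebra_simps)
qed

lemma T_add_cmult:
  assumes "f \<in> L2" "g \<in> L2"
  shows "T (\<lambda>x. f x + c * g x) = (\<lambda>x. T f x + c * T g x)"
  unfolding Top_eq G0.ip_k_add_cmult[OF assms] by (simp add: algebra_simps)

lemma T_diff:
  assumes "f \<in> L2" "g \<in> L2"
  shows "T (\<lambda>x. f x - g x) = (\<lambda>x. T f x - T g x)"
  unfolding Top_eq G0.ip_k_diff[OF assms] by (simp add: algebra_simps)

lemma vG1v_add_cmult:
  assumes "f \<in> L2" "g \<in> L2"
  shows "vG1v V (\<lambda>x. f x + c * g x) = (\<lambda>x. vG1v V f x + c * vG1v V g x)"
  unfolding vG1v_eq G1.ip_k_add_cmult[OF assms] by (simp add: algebra_simps)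

lemma vG1v_diff:
  assumes "f \<in> L2" "g \<in> L2"
  shows "vG1v V (\<lambda>x. f x - g x) = (\<lambda>x. vG1v V f x - vG1v V g x)"
  unfolding vG1v_eq G1.ip_k_diff[OF assms] by (simp add: algebra_simps)

text \<open>The coefficient of P T f along v (zero when V = 0 a.e., by division by zero).\<close>
definition coeff_v :: "(pt \<Rightarrow> real) \<Rightarrow> real" where
  "coeff_v f = ip v (T f) / L"

lemma Qop_eq: "Qop V f = (\<lambda>x. f x - v x * ip v f / L)"
  by (simp add: Qop_def Pop_def)

lemma ip_v_eq_zero_if_kerQTQ:
  assumes "f \<in> kerQTQ V"
  shows "ip v f = 0"
proof -
  have fL2: "f \<in> L2" and AEQ: "AE x in lborel. Qop V f x = f x"
    using assms by (auto simp: kerQTQ_def)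
  have [measurable]: "f \<in> borel_measurable lborel" using fL2 by (rule L2_borel_measurable)
  show ?thesis
  proof (cases "L = 0")
    case True
    then have "ip v f = ip (\<lambda>x. 0) f"
      using v_AE_zero_if_L1norm_zero fL2 by (intro ip_cong_AE) auto
    then show ?thesis by (simp add: ip_def)
  next
    case False
    have "AE x in lborel. (ip v f / L) * v x = 0" using AEQ by eventually_elim (auto simp: Qop_eq)
    then have "ip (\<lambda>x. (ip v f / L) * v x) v = ip (\<lambda>x. 0) v" by (intro ip_cong_AE) auto
    then have "ip v f / L * ip v v = 0" by (simp only: ip_cmult_left) (simp add: ip_def)
    then show ?thesis using False by (simp add: ip_v_v)
  qed
qed

lemma kerQTQ_iff:
  "f \<in> kerQTQ V \<longleftrightarrow> f \<in> L2 \<and> ip v f = 0 \<and> (AE x in lborel. T f x = v x * coeff_v f)"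
proof -
  have QTQ: "Qop V (T (Qop V f)) x = T f x - v x * coeff_v f" if "ip v f = 0" for x
  proof -
    have "Qop V f = f" using that by (simp add: Qop_eq)
    then show ?thesis by (simp add: Qop_eq coeff_v_def)
  qed
  show ?thesis
  proof
    assume f: "f \<in> kerQTQ V"
    then have "ip v f = 0" by (rule ip_v_eq_zero_if_kerQTQ)
    moreover have "AE x in lborel. Qop V (T (Qop V f)) x = 0" using f by (simp add: kerQTQ_def)
    ultimately show "f \<in> L2 \<and> ip v f = 0 \<and> (AE x in lborel. T f x = v x * coeff_v f)"
      using f QTQ by (auto simp: kerQTQ_def elim: eventually_mono)
  next
    assume f: "f \<in> L2 \<and> ip v f = 0 \<and> (AE x in lborel. T f x = v x * coeff_v f)"
    then have "Qop V f = f" by (simp add: Qop_eq)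
    then show "f \<in> kerQTQ V"
      using f QTQ unfolding kerQTQ_def by (auto elim: eventually_mono)
  qed
qed

lemma kerQTQ_L2: "f \<in> kerQTQ V \<Longrightarrow> f \<in> L2"
  by (simp add: kerQTQ_iff)

definition "T1_const = L / (3 * (8 * pi)^2)"

definition T1_form :: "(pt \<Rightarrow> real) \<Rightarrow> (pt \<Rightarrow> real) \<Rightarrow> real" where
  "T1_form g f = coeff_v f * ip g (T v) - T1_const * ip g (vG1v V f)"

lemma kerT1_iff: "f \<in> kerT1 V \<longleftrightarrow> f \<in> kerQTQ V \<and> (\<forall>g\<in>kerQTQ V. T1_form g f = 0)"
proof -
  have "T (Pop V (T f)) = (\<lambda>x. coeff_v f * T v x)" for f
  proof -
    have P: "Pop V (T f) = (\<lambda>x. coeff_v f * v x)" by (auto simp: Pop_def coeff_v_def)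
    have "T (\<lambda>x. coeff_v f * v x) = (\<lambda>x. coeff_v f * T v x)"
      unfolding Top_eq ip_cmult_right by (simp add: algebra_simps)
    then show ?thesis by (simp only: P)
  qed
  then show ?thesis
    by (auto simp: kerT1_def T1_form_def T1_const_def ip_cmult_right)
qed

lemma coeff_v_add_cmult:
  assumes "f \<in> L2" "g \<in> L2"
  shows "coeff_v (\<lambda>x. f x + c * g x) = coeff_v f + c * coeff_v g"
  using assms T_L2 L2_cmult L2_v
  by (simp add: coeff_v_def T_add_cmult ip_add_right ip_cmult_right add_divide_distrib)

lemma coeff_v_diff:
  assumes "f \<in> L2" "g \<in> L2"
  shows "coeff_v (\<lambda>x. f x - g x) = coeff_v f - coeff_v g"
  using assms T_L2 L2_v by (simp add: coeff_v_def T_diff ip_diff_right diff_divide_distrib)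

definition "coeff_v_bound = L2norm v * (1 + sqrt G0.HS) / \<bar>L\<bar>"

lemma coeff_v_bound_nonneg: "0 \<le> coeff_v_bound"
  using G0.HS_nonneg by (simp add: coeff_v_bound_def L2norm_nonneg)

lemma abs_coeff_v_le:
  assumes "f \<in> L2"
  shows "\<bar>coeff_v f\<bar> \<le> coeff_v_bound * L2norm f"
proof -
  have "\<bar>ip v (T f)\<bar> \<le> L2norm v * ((1 + sqrt G0.HS) * L2norm f)"
    using abs_ip_le_L2norm[OF L2_v T_L2[OF assms]] L2norm_T_le[OF assms]
    by (meson L2norm_nonneg mult_left_mono order_trans)
  then show ?thesis
    by (simp add: coeff_v_def coeff_v_bound_def abs_divide divide_right_mono)
qed

lemma T1_form_add_cmult:
  assumes "f \<in> L2" "g \<in> L2" "k \<in> L2"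
  shows "T1_form k (\<lambda>x. f x + c * g x) = T1_form k f + c * T1_form k g"
  using assms vG1v_L2 L2_cmult
  by (simp add: T1_form_def coeff_v_add_cmult vG1v_add_cmult ip_add_right ip_cmult_right
      algebra_simps)

lemma T1_form_diff:
  assumes "f \<in> L2" "g \<in> L2" "k \<in> L2"
  shows "T1_form k (\<lambda>x. f x - g x) = T1_form k f - T1_form k g"
  using assms vG1v_L2
  by (simp add: T1_form_def coeff_v_diff vG1v_diff ip_diff_right algebra_simps)

lemma abs_T1_form_le:
  assumes "f \<in> L2" "k \<in> L2"
  shows "\<bar>T1_form k f\<bar> \<le> (coeff_v_bound * \<bar>ip k (T v)\<bar> + \<bar>T1_const\<bar> * L2norm k * sqrt G1.HS)
    * L2norm f"
proof -
  have "\<bar>ip k (vG1v V f)\<bar> \<le> L2norm k * (sqrt G1.HS * L2norm f)"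
    using abs_ip_le_L2norm[OF assms(2) vG1v_L2[OF assms(1)]] G1.L2norm_apply_le[OF assms(1)]
    by (simp add: vG1v_eq) (meson L2norm_nonneg mult_left_mono order_trans)
  then have "\<bar>T1_const * ip k (vG1v V f)\<bar> \<le> \<bar>T1_const\<bar> * L2norm k * sqrt G1.HS * L2norm f"
    by (simp add: abs_mult mult_left_mono mult.assoc)
  moreover have "\<bar>coeff_v f * ip k (T v)\<bar> \<le> coeff_v_bound * \<bar>ip k (T v)\<bar> * L2norm f"
    using mult_right_mono[OF abs_coeff_v_le[OF assms(1)] abs_ge_zero[of "ip k (T v)"]]
    by (simp add: abs_mult mult_ac)
  ultimately show ?thesis
    unfolding T1_form_def by (simp add: algebra_simps abs_triangle_ineq4 order_trans[OF abs_triangle_ineq4])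
qed

lemma L2_subspace_kerQTQ: "L2_subspace (kerQTQ V)"
  unfolding L2_subspace_def
proof (intro conjI ballI allI subsetI)
  show "f \<in> kerQTQ V \<Longrightarrow> f \<in> L2" for f by (rule kerQTQ_L2)
  show "(\<lambda>x. 0) \<in> kerQTQ V"
    by (simp add: kerQTQ_iff Top_eq coeff_v_def ip_def)
  fix f g c
  assume f: "f \<in> kerQTQ V" and g: "g \<in> kerQTQ V"
  then have fg: "f \<in> L2" "g \<in> L2" by (simp_all add: kerQTQ_L2)
  have "AE x in lborel. T f x = v x * coeff_v f" "AE x in lborel. T g x = v x * coeff_v g"
    using f g by (simp_all add: kerQTQ_iff)
  then have "AE x in lborel. T (\<lambda>x. f x + c * g x) x = v x * coeff_v (\<lambda>x. f x + c * g x)"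
    unfolding T_add_cmult[OF fg] coeff_v_add_cmult[OF fg] by eventually_elim (simp add: algebra_simps)
  moreover have "ip v (\<lambda>x. f x + c * g x) = 0"
    using f g fg L2_v L2_cmult by (simp add: ip_add_right ip_cmult_right ip_v_eq_zero_if_kerQTQ)
  ultimately show "(\<lambda>x. f x + c * g x) \<in> kerQTQ V"
    using fg by (simp add: kerQTQ_iff L2_add_cmult)
qed

lemma L2_subspace_kerT1: "L2_subspace (kerT1 V)"
  unfolding L2_subspace_def
proof (intro conjI ballI allI subsetI)
  show "f \<in> kerT1 V \<Longrightarrow> f \<in> L2" for f by (simp add: kerT1_iff kerQTQ_L2)
  have "T1_form k (\<lambda>x. 0) = 0" for k
    by (simp add: T1_form_def coeff_v_def Top_eq vG1v_eq ip_def)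
  then show "(\<lambda>x. 0) \<in> kerT1 V"
    using L2_subspaceD(2)[OF L2_subspace_kerQTQ] by (simp add: kerT1_iff)
  fix f g c
  assume "f \<in> kerT1 V" "g \<in> kerT1 V"
  then show "(\<lambda>x. f x + c * g x) \<in> kerT1 V"
    using L2_subspaceD(3)[OF L2_subspace_kerQTQ] by (auto simp: kerT1_iff T1_form_add_cmult kerQTQ_L2)
qed

end

section \<open>Completeness of the zero-energy subspaces\<close>

context decaying_potential
begin

lemma abs_ip_G0v_le:
  assumes "f \<in> L2"
  shows "\<bar>ip (G0v x) f\<bar> \<le> (1 + norm x)^2 * sqrt moment * L2norm f"
proof -
  have "sqrt ((1 + norm x)^4) = (1 + norm x)^2"
    by (rule real_sqrt_unique) (simp_all flip: power_mult)
  then have "sqrt ((1 + norm x)^4 * moment) = (1 + norm x)^2 * sqrt moment"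
    by (simp add: real_sqrt_mult)
  then show ?thesis using G0.abs_ip_k_le[OF assms, of x] by simp
qed

lemma coeff_v_tendsto:
  assumes "(\<lambda>n. L2norm (\<lambda>x. f n x - F x)) \<longlonglongrightarrow> 0" "\<And>n. f n \<in> L2" "F \<in> L2"
  shows "(\<lambda>n. coeff_v (f n)) \<longlonglongrightarrow> coeff_v F"
  using abs_coeff_v_le[OF L2_diff[OF assms(2,3)]]
  by (intro tendsto_if_L2norm_diff_tendsto_zero[OF assms(1)])
    (simp add: coeff_v_diff[OF assms(2,3)])

lemma T1_form_tendsto:
  assumes "(\<lambda>n. L2norm (\<lambda>x. f n x - F x)) \<longlonglongrightarrow> 0" "\<And>n. f n \<in> L2" "F \<in> L2" "k \<in> L2"
  shows "(\<lambda>n. T1_form k (f n)) \<longlonglongrightarrow> T1_form k F"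
  using abs_T1_form_le[OF L2_diff[OF assms(2,3)] assms(4)]
  by (intro tendsto_if_L2norm_diff_tendsto_zero[OF assms(1)])
    (simp add: T1_form_diff[OF assms(2,3,4)])

lemma kerQTQ_AE_eq:
  assumes "f \<in> kerQTQ V"
  shows "AE x in lborel. f x = U x * (v x * (coeff_v f - ip (G0v x) f))"
  using assms unfolding kerQTQ_iff
proof (elim conjE eventually_mono)
  fix x
  assume "T f x = v x * coeff_v f"
  then have "U x * f x = v x * (coeff_v f - ip (G0v x) f)"
    by (simp add: Top_eq algebra_simps)
  then have "U x * (U x * f x) = U x * (v x * (coeff_v f - ip (G0v x) f))"
    by simp
  then show "f x = U x * (v x * (coeff_v f - ip (G0v x) f))"
    by (simp add: U_cancel)
qed

definition envelope :: "pt \<Rightarrow> real" where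
  "envelope x = (coeff_v_bound + (1 + norm x)^2 * sqrt moment) * v x"

lemma envelope_nonneg: "0 \<le> envelope x"
  using coeff_v_bound_nonneg moment_nonneg v_nonneg by (simp add: envelope_def)

lemma L2_envelope: "envelope \<in> L2"
proof -
  have "(\<lambda>x. coeff_v_bound * v x + sqrt moment * ((1 + norm x)^2 * v x)) \<in> L2"
    by (intro L2_add L2_cmult L2_v L2_weight_mult_v)
  moreover have "envelope = (\<lambda>x. coeff_v_bound * v x + sqrt moment * ((1 + norm x)^2 * v x))"
    by (auto simp: envelope_def algebra_simps)
  ultimately show ?thesis by simp
qed

lemma kerQTQ_diff_AE_le:
  assumes f: "f \<in> kerQTQ V" and g: "g \<in> kerQTQ V"
  shows "AE x in lborel. \<bar>f x - g x\<bar> \<le> envelope x * L2norm (\<lambda>x. f x - g x)"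
  using kerQTQ_AE_eq[OF f] kerQTQ_AE_eq[OF g]
proof eventually_elim
  case (elim x)
  have fg: "f \<in> L2" "g \<in> L2" using f g by (simp_all add: kerQTQ_L2)
  define d where "d = (\<lambda>x. f x - g x)"
  have d: "d \<in> L2" unfolding d_def by (rule L2_diff[OF fg])
  have eq: "f x - g x = U x * (v x * (coeff_v d - ip (G0v x) d))"
    using elim unfolding d_def coeff_v_diff[OF fg] G0.ip_k_diff[OF fg] by (simp add: algebra_simps)
  have "\<bar>coeff_v d - ip (G0v x) d\<bar> \<le> coeff_v_bound * L2norm d + (1 + norm x)^2 * sqrt moment * L2norm d"
    using abs_coeff_v_le[OF d] abs_ip_G0v_le[OF d, of x] abs_triangle_ineq4[of "coeff_v d" "ip (G0v x) d"]
    by linarith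
  then have "v x * \<bar>coeff_v d - ip (G0v x) d\<bar> \<le> v x * ((coeff_v_bound + (1 + norm x)^2 * sqrt moment) * L2norm d)"
    unfolding distrib_right by (rule mult_left_mono[OF _ v_nonneg])
  then show ?case
    unfolding d_def[symmetric] eq by (simp add: abs_mult U_abs v_nonneg envelope_def mult_ac)
qed

context
  fixes f :: "nat \<Rightarrow> pt \<Rightarrow> real"
  assumes f_kerQTQ: "\<And>n. f n \<in> kerQTQ V" and f_Cauchy: "L2_Cauchy f"
begin

lemma f_L2: "f n \<in> L2"
  by (rule kerQTQ_L2[OF f_kerQTQ])

lemma convergent_coeff_v: "convergent (\<lambda>n. coeff_v (f n))"
proof (rule convergent_if_Lipschitz_L2_Cauchy[OF f_Cauchy coeff_v_bound_nonneg])
  show "\<bar>coeff_v (f m) - coeff_v (f n)\<bar> \<le> coeff_v_bound * L2norm (\<lambda>x. f m x - f n x)" for m n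
    unfolding coeff_v_diff[OF f_L2 f_L2, symmetric] by (rule abs_coeff_v_le[OF L2_diff[OF f_L2 f_L2]])
qed

lemma convergent_ip_G0v: "convergent (\<lambda>n. ip (G0v x) (f n))"
proof (rule convergent_if_Lipschitz_L2_Cauchy[OF f_Cauchy])
  show "0 \<le> (1 + norm x)^2 * sqrt moment" using moment_nonneg by simp
  show "\<bar>ip (G0v x) (f m) - ip (G0v x) (f n)\<bar>
      \<le> (1 + norm x)^2 * sqrt moment * L2norm (\<lambda>x. f m x - f n x)" for m n
    unfolding G0.ip_k_diff[OF f_L2 f_L2, symmetric] by (rule abs_ip_G0v_le[OF L2_diff[OF f_L2 f_L2]])
qed

definition limit_fun :: "pt \<Rightarrow> real" where
  "limit_fun x = U x * (v x * (lim (\<lambda>n. coeff_v (f n)) - lim (\<lambda>n. ip (G0v x) (f n))))"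

lemma limit_fun_measurable [measurable]: "limit_fun \<in> borel_measurable lborel"
proof -
  have "(\<lambda>x. lim (\<lambda>n. ip (G0v x) (f n))) \<in> borel_measurable lborel"
  proof (rule borel_measurable_LIMSEQ_real)
    show "(\<lambda>n. ip (G0v x) (f n)) \<longlonglongrightarrow> lim (\<lambda>n. ip (G0v x) (f n))" for x
      using convergent_ip_G0v by (simp add: convergent_LIMSEQ_iff)
    show "(\<lambda>x. ip (G0v x) (f n)) \<in> borel_measurable lborel" for n
      by (rule G0.ip_k_measurable[OF f_L2])
  qed
  then show ?thesis unfolding limit_fun_def by measurable
qed

lemma AE_tendsto_limit_fun: "AE x in lborel. (\<lambda>n. f n x) \<longlonglongrightarrow> limit_fun x"
proof -
  have "AE x in lborel. \<forall>n. f n x = U x * (v x * (coeff_v (f n) - ip (G0v x) (f n)))"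
    using kerQTQ_AE_eq[OF f_kerQTQ] by (simp add: AE_all_countable)
  then show ?thesis
  proof eventually_elim
  case (elim x)
  then show ?case
    unfolding limit_fun_def using convergent_coeff_v convergent_ip_G0v[of x]
    by (simp add: convergent_LIMSEQ_iff tendsto_intros)
  qed
qed

lemma L2norm_diff_limit_fun_le:
  assumes "e > 0"
  shows "\<exists>N. \<forall>n\<ge>N. (\<lambda>x. f n x - limit_fun x) \<in> L2 \<and> L2norm (\<lambda>x. f n x - limit_fun x) \<le> e * L2norm envelope"
proof -
  obtain N where N: "\<And>m n. m \<ge> N \<Longrightarrow> n \<ge> N \<Longrightarrow> L2norm (\<lambda>x. f m x - f n x) < e"
    using f_Cauchy assms unfolding L2_Cauchy_def by blast
  have "AE x in lborel. \<forall>n m. \<bar>f n x - f m x\<bar> \<le> envelope x * L2norm (\<lambda>x. f n x - f m x)"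
    using kerQTQ_diff_AE_le[OF f_kerQTQ f_kerQTQ] by (simp add: AE_all_countable)
  note AE_Lipschitz = this
  have "(\<lambda>x. f n x - limit_fun x) \<in> L2 \<and> L2norm (\<lambda>x. f n x - limit_fun x) \<le> e * L2norm envelope"
    if n: "n \<ge> N" for n
  proof -
    from AE_tendsto_limit_fun AE_Lipschitz
    have "AE x in lborel. \<bar>f n x - limit_fun x\<bar> \<le> \<bar>e * envelope x\<bar>"
    proof eventually_elim
      case (elim x)
      have "\<bar>f n x - f m x\<bar> \<le> envelope x * e" if "m \<ge> N" for m
      proof -
        have "envelope x * L2norm (\<lambda>x. f n x - f m x) \<le> envelope x * e"
          using N[OF n that] by (intro mult_left_mono envelope_nonneg) simp
        then show ?thesis using elim(2)[rule_format, of n m] by linarith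
      qed
      moreover have "(\<lambda>m. \<bar>f n x - f m x\<bar>) \<longlonglongrightarrow> \<bar>f n x - limit_fun x\<bar>"
        using elim(1) by (intro tendsto_intros)
      ultimately have "\<bar>f n x - limit_fun x\<bar> \<le> envelope x * e"
        by (intro LIMSEQ_le_const2) auto
      then show ?case using assms envelope_nonneg[of x] by (simp add: abs_mult mult.commute)
    qed
    moreover have "(\<lambda>x. f n x - limit_fun x) \<in> borel_measurable lborel"
      using f_L2[of n] by measurable
    ultimately show ?thesis
      using L2_and_L2norm_le_if_AE_abs_le[of "\<lambda>x. f n x - limit_fun x" "\<lambda>x. e * envelope x"]
        L2_cmult[OF L2_envelope, of e] assms
      by (simp add: L2norm_cmult)
  qed
  then show ?thesis by blast
qed

lemma L2_limit_fun: "limit_fun \<in> L2"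
proof -
  obtain n where "(\<lambda>x. f n x - limit_fun x) \<in> L2"
    using L2norm_diff_limit_fun_le[of 1] by auto
  from L2_diff[OF f_L2[of n] this] show ?thesis by simp
qed

lemma L2norm_diff_limit_fun_tendsto: "(\<lambda>n. L2norm (\<lambda>x. f n x - limit_fun x)) \<longlonglongrightarrow> 0"
proof (rule LIMSEQ_I)
  fix r :: real
  assume "r > 0"
  then have "r / (L2norm envelope + 1) > 0" by (simp add: L2norm_nonneg add_nonneg_pos)
  then obtain N where N: "\<And>n. n \<ge> N \<Longrightarrow> L2norm (\<lambda>x. f n x - limit_fun x) \<le> r / (L2norm envelope + 1) * L2norm envelope"
    using L2norm_diff_limit_fun_le by blast
  have "r / (L2norm envelope + 1) * L2norm envelope < r / (L2norm envelope + 1) * (L2norm envelope + 1)"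
    using \<open>r / (L2norm envelope + 1) > 0\<close> by (intro mult_strict_left_mono) auto
  then have "r / (L2norm envelope + 1) * L2norm envelope < r"
    using L2norm_nonneg[of envelope] by simp
  then have "norm (L2norm (\<lambda>x. f n x - limit_fun x) - 0) < r" if "n \<ge> N" for n
    using N[OF that] L2norm_nonneg[of "\<lambda>x. f n x - limit_fun x"] by simp
  then show "\<exists>N. \<forall>n\<ge>N. norm (L2norm (\<lambda>x. f n x - limit_fun x) - 0) < r" by blast
qed

lemma limit_fun_kerQTQ: "limit_fun \<in> kerQTQ V"
proof -
  note tendsto = L2norm_diff_limit_fun_tendsto f_L2 L2_limit_fun
  have "(\<lambda>n. ip v (f n)) \<longlonglongrightarrow> ip v limit_fun"
    by (rule ip_tendsto_if_L2norm_diff_tendsto_zero[OF tendsto L2_v])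
  then have ip_v: "ip v limit_fun = 0"
    using ip_v_eq_zero_if_kerQTQ[OF f_kerQTQ] by (simp add: LIMSEQ_const_iff)
  have "ip (G0v x) limit_fun = lim (\<lambda>n. ip (G0v x) (f n))" for x
    using ip_tendsto_if_L2norm_diff_tendsto_zero[OF tendsto G0.k_L2[of x]]
    by (rule limI[symmetric])
  moreover have "coeff_v limit_fun = lim (\<lambda>n. coeff_v (f n))"
    using coeff_v_tendsto[OF tendsto] by (rule limI[symmetric])
  ultimately have "T limit_fun x = v x * coeff_v limit_fun" for x
    unfolding Top_eq limit_fun_def by (simp add: U_cancel algebra_simps)
  then show ?thesis using L2_limit_fun ip_v by (simp add: kerQTQ_iff)
qed

end

lemma L2_complete_kerQTQ: "L2_complete (kerQTQ V)"
  unfolding L2_complete_def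
  using limit_fun_kerQTQ L2norm_diff_limit_fun_tendsto by blast

text \<open>ker T1 is cut out of ker QTQ by the continuous functionals T1_form g.\<close>
lemma L2_complete_kerT1: "L2_complete (kerT1 V)"
  unfolding L2_complete_def
proof (intro allI impI)
  fix f
  assume f: "(\<forall>n. f n \<in> kerT1 V) \<and> L2_Cauchy f"
  then have fQ: "f n \<in> kerQTQ V" for n by (simp add: kerT1_iff)
  then obtain F where FQ: "F \<in> kerQTQ V" and lim: "(\<lambda>n. L2norm (\<lambda>x. f n x - F x)) \<longlonglongrightarrow> 0"
    using L2_complete_kerQTQ f unfolding L2_complete_def by blast
  have "T1_form k F = 0" if "k \<in> kerQTQ V" for k
  proof -
    have "(\<lambda>n. T1_form k (f n)) \<longlonglongrightarrow> T1_form k F"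
      using fQ FQ that by (intro T1_form_tendsto[OF lim]) (auto simp: kerQTQ_L2)
    moreover have "T1_form k (f n) = 0" for n using f that by (simp add: kerT1_iff)
    ultimately show ?thesis by (simp add: LIMSEQ_const_iff)
  qed
  then show "\<exists>F\<in>kerT1 V. (\<lambda>n. L2norm (\<lambda>x. f n x - F x)) \<longlonglongrightarrow> 0"
    using FQ lim by (auto simp: kerT1_iff)
qed

end

section \<open>The uniform bound on K_{t,4}\<close>

lemma ennreal_integral_le_nn_integral:
  fixes \<phi> :: "'a \<Rightarrow> real"
  assumes "\<phi> \<in> borel_measurable M" "\<And>x. 0 \<le> \<phi> x"
  shows "ennreal (integral\<^sup>L M \<phi>) \<le> (\<integral>\<^sup>+x. ennreal (\<phi> x) \<partial>M)"
proof (cases "integrable M \<phi>")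
  case True
  then show ?thesis using assms by (simp add: nn_integral_eq_integral)
next
  case False
  then show ?thesis by (simp add: not_integrable_integral_eq)
qed

lemma ennreal_norm_mult_Aop_le:
  assumes [measurable]: "(\<lambda>(x, y). a x y) \<in> borel_measurable (lborel \<Otimes>\<^sub>M lborel)"
    and [measurable]: "f \<in> borel_measurable lborel"
  shows "ennreal (norm (complex_of_real (g z) * Aop a f z))
    \<le> (\<integral>\<^sup>+ y. ennreal (norm (a z y) * \<bar>f y\<bar> * \<bar>g z\<bar>) \<partial>lborel)"
proof -
  have [measurable]: "(\<lambda>y. a z y) \<in> borel_measurable lborel"
    using measurable_Pair2[OF assms(1)[unfolded split_beta'], of z] by simp
  have "norm (Aop a f z) \<le> (\<integral>y. norm (a z y) * \<bar>f y\<bar> \<partial>lborel)"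
    unfolding Aop_def using integral_norm_bound[of lborel "\<lambda>y. a z y * complex_of_real (f y)"]
    by (simp add: norm_mult)
  then have "ennreal (norm (complex_of_real (g z) * Aop a f z))
      \<le> ennreal \<bar>g z\<bar> * ennreal (\<integral>y. norm (a z y) * \<bar>f y\<bar> \<partial>lborel)"
    by (simp add: norm_mult mult_left_mono ennreal_mult[symmetric] ennreal_leI)
  also have "\<dots> \<le> ennreal \<bar>g z\<bar> * (\<integral>\<^sup>+ y. ennreal (norm (a z y) * \<bar>f y\<bar>) \<partial>lborel)"
    by (intro mult_left_mono ennreal_integral_le_nn_integral) auto
  also have "\<dots> = (\<integral>\<^sup>+ y. ennreal (norm (a z y) * \<bar>f y\<bar> * \<bar>g z\<bar>) \<partial>lborel)"
    by (simp add: nn_integral_cmult[symmetric] ennreal_mult[symmetric] mult_ac)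
  finally show ?thesis .
qed

lemma abs_bounded_bilinear_bound:
  assumes "abs_bounded a"
  shows "\<exists>C\<ge>0. \<forall>f\<in>L2. \<forall>g\<in>L2.
    norm (\<integral>z. complex_of_real (g z) * Aop a f z \<partial>lborel) \<le> C * L2norm f * L2norm g"
proof -
  obtain C where C: "\<And>f g. f \<in> L2 \<Longrightarrow> g \<in> L2 \<Longrightarrow>
      (\<integral>\<^sup>+ x. (\<integral>\<^sup>+ y. ennreal (norm (a x y) * \<bar>f y\<bar> * \<bar>g x\<bar>) \<partial>lborel) \<partial>lborel)
        \<le> ennreal (C * L2norm f * L2norm g)"
    using assms by (auto simp: abs_bounded_def)
  have "norm (\<integral>z. complex_of_real (g z) * Aop a f z \<partial>lborel) \<le> max C 0 * L2norm f * L2norm g"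
    if f: "f \<in> L2" and g: "g \<in> L2" for f g
  proof -
    have "(\<integral>\<^sup>+ z. ennreal (norm (complex_of_real (g z) * Aop a f z)) \<partial>lborel)
        \<le> (\<integral>\<^sup>+ x. (\<integral>\<^sup>+ y. ennreal (norm (a x y) * \<bar>f y\<bar> * \<bar>g x\<bar>) \<partial>lborel) \<partial>lborel)"
      using assms L2_borel_measurable[OF f]
      by (intro nn_integral_mono ennreal_norm_mult_Aop_le) (auto simp: abs_bounded_def)
    also have "\<dots> \<le> ennreal (max C 0 * L2norm f * L2norm g)"
      using C[OF f g] by (rule order_trans) (intro ennreal_leI mult_right_mono, auto simp: L2norm_nonneg)
    finally have "(\<integral>z. norm (complex_of_real (g z) * Aop a f z) \<partial>lborel) \<le> max C 0 * L2norm f * L2norm g"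
      by (intro integral_real_bounded) (auto simp: L2norm_nonneg)
    then show ?thesis by (rule order_trans[OF integral_norm_bound])
  qed
  then show ?thesis by (intro exI[of _ "max C 0"]) auto
qed

lemma nn_integral_inverse_square_tail:
  assumes "s > 0"
  shows "(\<integral>\<^sup>+ l. ennreal (indicator {s..} l * (1 / l^2)) \<partial>lborel) = ennreal (1 / s)"
proof -
  have "((\<lambda>l::real. 1 / l^2) has_integral 1 / s) {s..}"
    using has_integral_inverse_power_to_inf[of 2 s] assms by simp
  then have "((\<lambda>l. if l \<in> {s..} then 1 / l^2 else 0) has_integral 1 / s) UNIV"
    by (simp only: has_integral_restrict_UNIV)
  moreover have "(\<lambda>l. if l \<in> {s..} then 1 / l^2 else 0) = (\<lambda>l::real. indicator {s..} l * (1 / l^2))"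
    by (auto simp: indicator_def)
  ultimately have "((\<lambda>l::real. indicator {s..} l * (1 / l^2)) has_integral 1 / s) UNIV"
    by simp
  from nn_integral_has_integral_lborel[OF _ _ this] show ?thesis
    by (auto simp: indicator_def)
qed

lemma min_inverse_square_le_split:
  fixes l s t :: real
  shows "indicator {0<..} l * min \<bar>t\<bar> (1 / l^2) \<le> \<bar>t\<bar> * indicator {0..s} l + indicator {s..} l * (1 / l^2)"
  by (cases "l \<le> 0"; cases "l \<le> s") (auto simp: indicator_def)

text \<open>Split at s = |t|^(-1/2): the integrand is at most |t| before s and at most 1/l^2 after.\<close>
lemma nn_integral_min_inverse_square_le:
  "(\<integral>\<^sup>+ l. ennreal (indicator {0<..} l * min \<bar>t\<bar> (1 / l^2)) \<partial>lborel) \<le> ennreal (2 * sqrt \<bar>t\<bar>)"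
proof (cases "t = 0")
  case True
  then show ?thesis by simp
next
  case False
  define s where "s = 1 / sqrt \<bar>t\<bar>"
  have s: "s > 0" using False by (simp add: s_def)
  have "(\<integral>\<^sup>+ l. ennreal (indicator {0<..} l * min \<bar>t\<bar> (1 / l^2)) \<partial>lborel)
      \<le> (\<integral>\<^sup>+ l. ennreal (\<bar>t\<bar> * indicator {0..s} l) + ennreal (indicator {s..} l * (1 / l^2)) \<partial>lborel)"
  proof (intro nn_integral_mono)
    fix l :: real
    show "ennreal (indicator {0<..} l * min \<bar>t\<bar> (1 / l^2))
        \<le> ennreal (\<bar>t\<bar> * indicator {0..s} l) + ennreal (indicator {s..} l * (1 / l^2))"
      using min_inverse_square_le_split[of l t s]
      by (simp add: ennreal_plus[symmetric] ennreal_leI del: ennreal_plus)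
  qed
  also have "\<dots> = (\<integral>\<^sup>+ l. ennreal \<bar>t\<bar> * indicator {0..s} l \<partial>lborel)
      + (\<integral>\<^sup>+ l. ennreal (indicator {s..} l * (1 / l^2)) \<partial>lborel)"
    by (subst nn_integral_add) (auto simp: indicator_def intro!: nn_integral_cong)
  also have "\<dots> = ennreal (\<bar>t\<bar> * s) + ennreal (1 / s)"
    using s nn_integral_inverse_square_tail[OF s] by (simp add: nn_integral_cmult_indicator ennreal_mult)
  also have "\<dots> = ennreal (2 * sqrt \<bar>t\<bar>)"
    using s by (simp add: s_def real_div_sqrt ennreal_plus[symmetric] del: ennreal_plus)
  finally show ?thesis .
qed

lemma abs_sin_mult_square_div_le:
  fixes l t :: real
  assumes "l \<noteq> 0"
  shows "\<bar>sin (t * l^2) / l^2\<bar> \<le> min \<bar>t\<bar> (1 / l^2)"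
  using abs_sin_x_le_abs_x[of "t * l^2"] abs_sin_le_one[of "t * l^2"] assms
  by (simp add: abs_divide abs_mult divide_le_eq divide_right_mono)

lemma norm_set_integral_sin_le:
  fixes chi :: "real \<Rightarrow> real" and K :: complex
  assumes chi: "\<And>l. \<bar>chi l\<bar> \<le> B"
  shows "norm (set_lebesgue_integral lborel {0<..} (\<lambda>l. complex_of_real (chi l * sin (t * l^2) / l^2) * K))
    \<le> B * norm K * (2 * sqrt \<bar>t\<bar>)"
proof -
  have B: "0 \<le> B" using chi[of 0] by linarith
  have pointwise: "norm (indicator {0<..} l *\<^sub>R (complex_of_real (chi l * sin (t * l^2) / l^2) * K))
      \<le> (B * norm K) * (indicator {0<..} l * min \<bar>t\<bar> (1 / l^2))" for l :: real
  proof (cases "l > 0")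
    case True
    have "norm (complex_of_real (chi l * sin (t * l^2) / l^2) * K)
        = \<bar>chi l\<bar> * \<bar>sin (t * l^2) / l^2\<bar> * norm K"
      by (simp only: norm_mult norm_of_real times_divide_eq_right[symmetric] abs_mult)
    also have "\<dots> \<le> B * min \<bar>t\<bar> (1 / l^2) * norm K"
      using chi[of l] abs_sin_mult_square_div_le[of l t] True
      by (intro mult_right_mono mult_mono) auto
    finally show ?thesis
      using True by (simp add: mult_ac)
  qed (simp add: indicator_def)
  have "(\<integral>\<^sup>+ l. ennreal (norm (indicator {0<..} l *\<^sub>R (complex_of_real (chi l * sin (t * l^2) / l^2) * K))) \<partial>lborel)
      \<le> (\<integral>\<^sup>+ l. ennreal (B * norm K) * ennreal (indicator {0<..} l * min \<bar>t\<bar> (1 / l^2)) \<partial>lborel)"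
    using pointwise B by (intro nn_integral_mono) (simp add: ennreal_mult[symmetric] ennreal_leI)
  also have "\<dots> \<le> ennreal (B * norm K) * ennreal (2 * sqrt \<bar>t\<bar>)"
    by (simp add: nn_integral_cmult mult_left_mono nn_integral_min_inverse_square_le)
  also have "\<dots> = ennreal (B * norm K * (2 * sqrt \<bar>t\<bar>))"
    using B by (simp add: ennreal_mult[symmetric])
  finally show ?thesis
    unfolding set_lebesgue_integral_def using B
    by (intro order_trans[OF integral_norm_bound] integral_real_bounded) auto
qed

lemma bounded_if_differentiable_vanishing_outside:
  fixes f :: "real \<Rightarrow> real"
  assumes "\<And>x. f differentiable (at x)" and "\<And>x. \<bar>x\<bar> > r \<Longrightarrow> f x = 0"
  shows "\<exists>B. \<forall>x. \<bar>f x\<bar> \<le> B"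
proof -
  have "continuous_on {-r..r} f"
    using assms(1) by (intro continuous_at_imp_continuous_on ballI differentiable_imp_continuous_within)
  then have "bounded (f ` {-r..r})"
    by (intro compact_imp_bounded compact_continuous_image) auto
  then obtain B where B: "\<And>x. x \<in> {-r..r} \<Longrightarrow> \<bar>f x\<bar> \<le> B"
    unfolding bounded_real by blast
  have "\<bar>f x\<bar> \<le> max B 0" for x
  proof (cases "\<bar>x\<bar> \<le> r")
    case True
    then have "x \<in> {-r..r}" by (simp add: abs_le_iff)
    then show ?thesis using B by fastforce
  qed (use assms(2) in simp)
  then show ?thesis by blast
qed

context decaying_potential
begin

text \<open>Since S_2 v = 0, the constant term of G0 p w = -|p - w|/(8\<pi>) at w = 0 can be removed,
  leaving the increment (|p| - |p - w|)/(8\<pi>), which is bounded by |w| uniformly in p.\<close>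
lemma L2norm_S2_G0v_le: "L2norm (S2 V (G0v p)) \<le> L2norm (\<lambda>w. norm w * v w)"
proof -
  define h where "h w = (norm p - norm (p - w)) / (8 * pi) * v w" for w
  have h_eq: "h = (\<lambda>w. G0v p w + (norm p / (8 * pi)) * v w)"
    by (auto simp: h_def G0_def field_simps)
  have same: "ip (G0v p) k = ip h k" if "k \<in> kerT1 V" for k
  proof -
    have k: "k \<in> L2" "ip v k = 0" using that by (simp_all add: kerT1_iff kerQTQ_iff)
    have "ip h k = ip (G0v p) k + ip (\<lambda>w. (norm p / (8 * pi)) * v w) k"
      unfolding h_eq by (rule ip_add_left[OF G0.k_L2 L2_cmult[OF L2_v] k(1)])
    then show ?thesis by (simp only: ip_cmult_left k(2))
  qed
  have "AE w in lborel. \<bar>h w\<bar> \<le> \<bar>norm w * v w\<bar>"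
  proof (rule AE_I2)
    fix w
    have "\<bar>norm p - norm (p - w)\<bar> * 1 \<le> norm w * (8 * pi)"
      using norm_triangle_ineq3[of p "p - w"] pi_gt3 by (intro mult_mono) auto
    then have "\<bar>norm p - norm (p - w)\<bar> / (8 * pi) \<le> norm w"
      using pi_gt3 by (simp add: divide_le_eq)
    then have "\<bar>norm p - norm (p - w)\<bar> / (8 * pi) * v w \<le> norm w * v w"
      by (intro mult_right_mono v_nonneg)
    then show "\<bar>h w\<bar> \<le> \<bar>norm w * v w\<bar>"
      by (simp add: h_def abs_mult v_nonneg)
  qed
  moreover have "h \<in> borel_measurable lborel" unfolding h_def by measurable
  ultimately have "h \<in> L2" "L2norm h \<le> L2norm (\<lambda>w. norm w * v w)"
    using L2_and_L2norm_le_if_AE_abs_le[OF _ L2_norm_mult_v] by auto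
  moreover have "L2norm (S2 V (G0v p)) \<le> L2norm h"
    unfolding S2_def using same \<open>h \<in> L2\<close>
    by (intro L2norm_orthproj_le[OF L2_subspace_kerT1 L2_complete_kerT1 G0.k_L2])
  ultimately show ?thesis by linarith
qed

lemma S2_G0v_L2: "S2 V (G0v p) \<in> L2"
  using orthproj(1)[OF L2_subspace_kerT1 L2_complete_kerT1 G0.k_L2] L2_subspaceD(1)[OF L2_subspace_kerT1]
  by (auto simp: S2_def)

lemma leadKer_bounded:
  assumes "abs_bounded a"
  shows "\<exists>C. \<forall>x y. norm (leadKer V a x y) \<le> C"
proof -
  obtain C where C: "C \<ge> 0" "\<And>f g. f \<in> L2 \<Longrightarrow> g \<in> L2 \<Longrightarrow>
      norm (\<integral>z. complex_of_real (g z) * Aop a f z \<partial>lborel) \<le> C * L2norm f * L2norm g"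
    using abs_bounded_bilinear_bound[OF assms] by blast
  define M where "M = L2norm (\<lambda>w. norm w * v w)"
  have "norm (leadKer V a x y) \<le> C * M * M" for x y
  proof -
    have G0v_y: "(\<lambda>w. v w * G0 w y) = G0v y"
      by (auto simp: G0_commute[of _ y] mult.commute)
    have "norm (leadKer V a x y) \<le> C * L2norm (S2 V (G0v y)) * L2norm (S2 V (G0v x))"
      unfolding leadKer_def G0v_y by (intro C(2) S2_G0v_L2)
    also have "\<dots> \<le> C * M * M"
      using L2norm_S2_G0v_le C(1) L2norm_nonneg unfolding M_def
      by (intro mult_mono mult_left_mono) auto
    finally show ?thesis .
  qed
  then show ?thesis by blast
qed

end

theorem proposition3p10:
  fixes V :: "pt \<Rightarrow> real" and a :: "pt \<Rightarrow> pt \<Rightarrow> complex"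
    and chi :: "real \<Rightarrow> real" and l0 :: real
  assumes "V \<in> borel_measurable lborel"
    and "\<exists>\<epsilon>>0. \<exists>C. \<forall>x. \<bar>V x\<bar> \<le> C * (1 + norm x) powr (-19 - \<epsilon>)"
    and "abs_bounded a"
    and "\<forall>n x. ((deriv ^^ n) chi) differentiable (at x)"
    and "\<forall>x. chi (-x) = chi x"
    and "\<exists>\<delta>>0. \<forall>x. \<bar>x\<bar> < \<delta> \<longrightarrow> chi x = 1"
    and "l0 > 0"
    and "\<forall>x. \<bar>x\<bar> > 2 * l0 \<longrightarrow> chi x = 0"
  shows "\<exists>C. \<forall>t x y. norm (Kt4 V a chi t x y) \<le> C * sqrt \<bar>t\<bar>"
proof -
  obtain C\<^sub>V where "\<And>x. \<bar>V x\<bar> * (1 + norm x)^4 \<le> C\<^sub>V * cauchy_weight x"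
    using decay_imp_cauchy_weight_bound[OF assms(2)] by blast
  then interpret decaying_potential V C\<^sub>V
    using assms(1) by unfold_locales
  obtain K where K: "\<And>x y. norm (leadKer V a x y) \<le> K"
    using leadKer_bounded[OF assms(3)] by blast
  obtain B where B: "\<And>l. \<bar>chi l\<bar> \<le> B"
    using bounded_if_differentiable_vanishing_outside[of chi "2 * l0"]
      assms(4)[rule_format, of 0] assms(8) by auto
  have "norm (Kt4 V a chi t x y) \<le> (B * K * 2) * sqrt \<bar>t\<bar>" for t x y
  proof -
    have "norm (Kt4 V a chi t x y) \<le> B * norm (leadKer V a x y) * (2 * sqrt \<bar>t\<bar>)"
      unfolding Kt4_def by (rule norm_set_integral_sin_le[OF B])
    also have "\<dots> \<le> B * K * (2 * sqrt \<bar>t\<bar>)"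
      using K B[of 0] by (intro mult_right_mono mult_left_mono) auto
    finally show ?thesis by (simp add: mult_ac)
  qed
  then show ?thesis by blast
qed

end
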